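(* Suppose there is $x_0\in\mathbb{R}$ such that $k^2$ is continuous and piecewise continuously differentiable, nonincreasing on $(-\infty,x_0]$ and nondecreasing on $[x_0,\infty)$, with minimum value $k^2_{\min}$ (which may be negative). Let $\Delta>0$ satisfy $k^2_{\min}\le\Delta^2\le\min\{k_{+\infty}^2,k_{-\infty}^2\}$. Then $$T\ \ge\ \mathrm{sech}^2\left\{\frac12\ln\frac{k_{+\infty}k_{-\infty}}{\Delta^2}+\frac{\max_x\sqrt{\max\{0,\Delta^2-k^2(x)\}}}{\Delta}+\int_{\{x:\,k^2(x)<\Delta^2\}}\sqrt{\Delta^2-k^2}\;\mathrm{d}x\right\}.$$
   Context: Standing setup: $k^2:\mathbb{R}\to\mathbb{R}$ is a piecewise continuous function (it may be negative somewhere) with $k^2(x)\to k_{\pm\infty}^2$ as $x\to\pm\infty$, where $k_{\pm\infty}>0$ and $k^2-k_{\pm\infty}^2$ is integrable near $\pm\infty$. For the equation $u''+k^2(x)u=0$ there is a solution with $u(x)=e^{ik_{-\infty}x}+r\,e^{-ik_{-\infty}x}+o(1)$ as $x\to-\infty$ and $u(x)=\tau\,e^{ik_{+\infty}x}+o(1)$ as $x\to+\infty$; the transmission probability is $T=(k_{+\infty}/k_{-\infty})|\tau|^2$. Here $\mathrm{sech}=1/\cosh$. *)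

theory Defs
  imports "HOL-Analysis.Analysis"
begin

definition sech :: "real \<Rightarrow> real" where
  "sech x = 1 / cosh x"

end

theory Submission
  imports Defs
begin

text \<open>
  For \<open>U = |u|\<^sup>2\<close>, \<open>V = |u'|\<^sup>2\<close>, \<open>P = Re (cnj u \<cdot> u')\<close> and the constant flux
  \<open>J = Im (cnj u \<cdot> u')\<close> one has \<open>P\<^sup>2 + J\<^sup>2 = U V\<close>, and the asymptotics give
  \<open>J = k\<^sub>+ |\<tau>|\<^sup>2 = k\<^sub>- (1 - |r|\<^sup>2)\<close>; a uniqueness argument shows \<open>J > 0\<close>.  With the comparison
  wave number \<open>\<phi> = \<surd>max(q, \<Delta>\<^sup>2) + s\<close>, \<open>s = \<surd>max(0, \<Delta>\<^sup>2 - q)\<close>, the normalised energy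
  \<open>E = (V + \<phi>\<^sup>2 U)/(2 \<phi> J) \<ge> 1\<close> has \<open>arcosh E\<close> decreasing at rate at most \<open>2 s + |\<phi>'|/\<phi>\<close>;
  monotonicity of \<open>q\<close> on both sides of \<open>x\<^sub>0\<close> turns the \<open>\<phi>'\<close>-term into bounded logarithms.
  As \<open>E \<rightarrow> 1\<close> at \<open>+\<infinity>\<close> and \<open>E \<rightarrow> (1 + |r|\<^sup>2)/(1 - |r|\<^sup>2)\<close> at \<open>-\<infinity>\<close>, this bounds
  \<open>ln ((1 + |r|)/(1 - |r|))\<close> by \<open>2 \<Theta>\<close>, whence \<open>T = 1 - |r|\<^sup>2 \<ge> sech\<^sup>2 \<Theta>\<close>.
\<close>

lemma norm_increment_le:
  fixes f :: "real \<Rightarrow> 'a::real_normed_vector"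
  assumes "a \<le> b" and deriv: "\<And>t. t \<in> {a..b} \<Longrightarrow> (f has_vector_derivative f' t) (at t)"
    and bound: "\<And>t. t \<in> {a..b} \<Longrightarrow> norm (f' t) \<le> B"
  shows "norm (f b - f a) \<le> B * (b - a)"
proof -
  have "norm (f b - f a) \<le> B * norm (b - a)"
  proof (rule differentiable_bound[where S="{a..b}" and f'="\<lambda>t h. h *\<^sub>R f' t"])
    fix t assume t: "t \<in> {a..b}"
    show "(f has_derivative (\<lambda>h. h *\<^sub>R f' t)) (at t within {a..b})"
      using deriv[OF t] by (simp add: has_vector_derivative_def has_derivative_at_withinI)
    have "onorm (\<lambda>h. h *\<^sub>R f' t) = onorm (\<lambda>h::real. h) * norm (f' t)"
      by (rule onorm_scaleR_left) (rule bounded_linear_ident)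
    also have "\<dots> = norm (f' t)" using onorm_id[where 'a=real] by (simp add: id_def)
    finally show "onorm (\<lambda>h. h *\<^sub>R f' t) \<le> B" using bound[OF t] by simp
  qed (use assms in auto)
  then show ?thesis using assms by simp
qed

lemma derivative_interpolation:
  fixes w w' w'' :: "real \<Rightarrow> 'a::real_normed_vector"
  assumes d1: "\<And>t. (w has_vector_derivative w' t) (at t)"
    and d2: "\<And>t. (w' has_vector_derivative w'' t) (at t)"
    and ab: "a \<le> b" and c: "c \<in> {a..b}" and M: "\<And>t. t \<in> {a..b} \<Longrightarrow> norm (w'' t) \<le> M"
  shows "(b - a) * norm (w' c) \<le> norm (w a) + norm (w b) + M * (b - a) * (b - a)"
proof -
  have M0: "M \<ge> 0" using M[OF c] norm_ge_zero order.trans by blast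
  have lip: "norm (w' t - w' c) \<le> M * (b - a)" if t: "t \<in> {a..b}" for t
  proof (cases "c \<le> t")
    case True
    have "norm (w' t - w' c) \<le> M * (t - c)"
      by (rule norm_increment_le[OF True d2]) (use M t c in auto)
    also have "\<dots> \<le> M * (b - a)" using M0 t c by (intro mult_left_mono) auto
    finally show ?thesis .
  next
    case False
    have "norm (w' c - w' t) \<le> M * (c - t)"
      by (rule norm_increment_le[OF _ d2]) (use False M t c in auto)
    also have "\<dots> \<le> M * (b - a)" using M0 t c by (intro mult_left_mono) auto
    finally show ?thesis by (simp add: norm_minus_commute)
  qed
  have "norm (w b - w a - (b - a) *\<^sub>R w' c) \<le> norm (b - a) * (M * (b - a))"
    by (rule vector_differentiable_bound_linearization[where S="{a..b}"])
       (use d1 lip c ab in \<open>auto simp: closed_segment_eq_real_ivl has_vector_derivative_at_within\<close>)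
  then have "norm ((b - a) *\<^sub>R w' c) \<le> norm (w b - w a) + M * (b - a) * (b - a)"
    using ab norm_triangle_sub[of "(b - a) *\<^sub>R w' c" "w b - w a"]
    by (simp add: norm_minus_commute algebra_simps)
  moreover have "norm (w b - w a) \<le> norm (w a) + norm (w b)"
    using norm_triangle_ineq4[of "w b" "w a"] by simp
  ultimately show ?thesis using ab by simp
qed

lemma eventually_on_unit_interval:
  fixes F :: "real filter"
  assumes F: "F = at_top \<or> F = at_bot" and P: "eventually P F"
  shows "eventually (\<lambda>t. \<forall>s\<in>{t..t+1}. P s) F"
  using F
proof
  assume F: "F = at_top"
  then obtain N where "\<forall>s\<ge>N. P s" using P using F eventually_at_top_linorder by auto
  then show ?thesis unfolding F eventually_at_top_linorder by (auto intro!: exI[of _ N])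
next
  assume F: "F = at_bot"
  then obtain N where "\<forall>s\<le>N. P s" using P using F eventually_at_bot_linorder by auto
  then show ?thesis unfolding F eventually_at_bot_linorder by (auto intro!: exI[of _ "N - 1"])
qed

lemma tendsto_zero_derivative:
  fixes w w' w'' :: "real \<Rightarrow> 'a::real_normed_vector"
  assumes F: "F = at_top \<or> F = at_bot"
    and d1: "\<And>t. (w has_vector_derivative w' t) (at t)"
    and d2: "\<And>t. (w' has_vector_derivative w'' t) (at t)"
    and w0: "(w \<longlongrightarrow> 0) F" and w''0: "(w'' \<longlongrightarrow> 0) F"
  shows "(w' \<longlongrightarrow> 0) F"
proof (rule tendstoI)
  fix e :: real assume e: "e > 0"
  have "eventually (\<lambda>t. norm (w t) < e/3 \<and> norm (w'' t) < e/3) F"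
    using tendstoD[OF w0, of "e/3"] tendstoD[OF w''0, of "e/3"] e
    by (auto intro: eventually_conj)
  then have "eventually (\<lambda>t. \<forall>s\<in>{t..t+1}. norm (w s) < e/3 \<and> norm (w'' s) < e/3) F"
    by (rule eventually_on_unit_interval[OF F])
  then show "eventually (\<lambda>t. dist (w' t) 0 < e) F"
  proof eventually_elim
    case (elim t)
    have "(t + 1 - t) * norm (w' t) \<le> norm (w t) + norm (w (t + 1)) + e/3 * (t + 1 - t) * (t + 1 - t)"
      by (rule derivative_interpolation[OF d1 d2]) (use elim in \<open>auto intro: less_imp_le\<close>)
    moreover have "norm (w t) < e/3" "norm (w (t + 1)) < e/3" using elim by auto
    ultimately show ?case by simp
  qed
qed

lemma nondecreasing_off_finite:
  fixes f :: "real \<Rightarrow> real"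
  assumes "a \<le> b" "finite S" "continuous_on {a..b} f"
    and deriv: "\<And>x. x \<in> {a<..<b} \<Longrightarrow> x \<notin> S \<Longrightarrow> \<exists>D. (f has_real_derivative D) (at x) \<and> D \<ge> 0"
  shows "f a \<le> f b"
proof -
  define f' where "f' x = (if x \<in> S \<union> {a, b} then 0 else SOME D. (f has_real_derivative D) (at x) \<and> D \<ge> 0)"
    for x
  have f': "(f has_real_derivative f' x) (at x) \<and> f' x \<ge> 0" if "x \<in> {a..b} - (S \<union> {a, b})" for x
    using someI_ex[OF deriv] that by (auto simp: f'_def)
  have "(f' has_integral (f b - f a)) {a..b}"
    by (rule fundamental_theorem_of_calculus_strong[where S="S \<union> {a, b}"])
       (use assms f' in \<open>auto simp: has_real_derivative_iff_has_vector_derivative\<close>)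
  moreover have "\<And>x. x \<in> {a..b} \<Longrightarrow> 0 \<le> f' x"
    using f' by (auto simp: f'_def)
  ultimately show ?thesis using has_integral_nonneg[of f' "f b - f a" "{a..b}"] by simp
qed

lemma DERIV_eventually_eq:
  fixes f h :: "real \<Rightarrow> real"
  assumes "eventually (\<lambda>y. f y = h y) (nhds t)" and "(h has_real_derivative D) (at t)"
  shows "(f has_real_derivative D) (at t)"
  using DERIV_cong_ev[OF refl assms(1) refl] assms(2) by simp

lemma finite_if_no_three_ordered:
  fixes A :: "real set"
  assumes "\<And>a b c. a \<in> A \<Longrightarrow> b \<in> A \<Longrightarrow> c \<in> A \<Longrightarrow> a < b \<Longrightarrow> b < c \<Longrightarrow> False"
  shows "finite A"
proof (rule ccontr)
  assume inf: "infinite A"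
  then obtain a where a: "a \<in> A" using infinite_imp_nonempty by blast
  have "infinite (A - {a})" using inf by simp
  then obtain b where b: "b \<in> A" "b \<noteq> a" using infinite_imp_nonempty by blast
  have "infinite (A - {a, b})" using inf by simp
  then obtain c where c: "c \<in> A" "c \<noteq> a" "c \<noteq> b" using infinite_imp_nonempty by blast
  show False using assms[of a b c] assms[of a c b] assms[of b a c] assms[of b c a]
    assms[of c a b] assms[of c b a] a b c by linarith
qed

text \<open>Cauchy--Schwarz step in the derivative estimate for the normalised energy: if
  \<open>a\<^sup>2 + b\<^sup>2 = (2 f J)\<^sup>2 (E\<^sup>2 - 1)\<close>, the rate \<open>(c a + d b) / (2 f\<^sup>2 J \<surd>(E\<^sup>2 - 1 + \<epsilon>))\<close>
  is bounded below by \<open>-(|c| + |d|) / f\<close>.\<close>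
lemma energy_rate_lower_bound:
  fixes a b c d f J E \<epsilon> :: real
  assumes f: "f > 0" and J: "J > 0" and e: "\<epsilon> > 0" and E: "E \<ge> 1"
    and ab: "a\<^sup>2 + b\<^sup>2 = (2 * f * J)\<^sup>2 * (E\<^sup>2 - 1)"
  shows "(c * a + d * b) / (2 * f\<^sup>2 * J) / sqrt (E\<^sup>2 - 1 + \<epsilon>) \<ge> - ((\<bar>c\<bar> + \<bar>d\<bar>) / f)"
proof -
  define R where "R = sqrt (E\<^sup>2 - 1 + \<epsilon>)"
  have E2: "E\<^sup>2 - 1 \<ge> 0" using E by (simp add: one_le_power)
  have R: "R > 0" unfolding R_def using E2 e by simp
  have sE: "sqrt (E\<^sup>2 - 1) \<le> R" unfolding R_def using e by simp
  have r: "sqrt (a\<^sup>2 + b\<^sup>2) = 2 * f * J * sqrt (E\<^sup>2 - 1)"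
    unfolding ab real_sqrt_mult using f J by simp
  have ha: "\<bar>a\<bar> \<le> sqrt (a\<^sup>2 + b\<^sup>2)" and hb: "\<bar>b\<bar> \<le> sqrt (a\<^sup>2 + b\<^sup>2)"
    using real_sqrt_le_mono[of "a\<^sup>2" "a\<^sup>2 + b\<^sup>2"] real_sqrt_le_mono[of "b\<^sup>2" "a\<^sup>2 + b\<^sup>2"] by auto
  have fJ: "2 * f * J > 0" using f J by simp
  have "\<bar>c * a + d * b\<bar> \<le> \<bar>c\<bar> * \<bar>a\<bar> + \<bar>d\<bar> * \<bar>b\<bar>"
    by (metis abs_mult abs_triangle_ineq)
  also have "\<dots> \<le> \<bar>c\<bar> * sqrt (a\<^sup>2 + b\<^sup>2) + \<bar>d\<bar> * sqrt (a\<^sup>2 + b\<^sup>2)"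
    by (intro add_mono mult_left_mono ha hb) auto
  also have "\<dots> = (\<bar>c\<bar> + \<bar>d\<bar>) * (2 * f * J) * sqrt (E\<^sup>2 - 1)"
    unfolding r by (simp add: algebra_simps)
  also have "\<dots> \<le> (\<bar>c\<bar> + \<bar>d\<bar>) * (2 * f * J) * R"
    using sE fJ by (intro mult_left_mono) auto
  finally have bound: "- ((\<bar>c\<bar> + \<bar>d\<bar>) * (2 * f * J) * R) \<le> c * a + d * b" by linarith
  have den: "2 * f\<^sup>2 * J * R > 0" using f J R by simp
  have "- ((\<bar>c\<bar> + \<bar>d\<bar>) / f) * (2 * f\<^sup>2 * J * R) = - ((\<bar>c\<bar> + \<bar>d\<bar>) * (2 * f * J) * R)"
    using f by (simp add: power2_eq_square field_simps)
  then have "- ((\<bar>c\<bar> + \<bar>d\<bar>) / f) \<le> (c * a + d * b) / (2 * f\<^sup>2 * J * R)"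
    using bound den by (simp add: pos_le_divide_eq)
  then show ?thesis unfolding R_def[symmetric] by (simp add: divide_divide_eq_left)
qed

lemma square_ratio_minus_one:
  fixes a d :: real
  assumes "d \<noteq> 0"
  shows "(a / d)\<^sup>2 - 1 = (a\<^sup>2 - d\<^sup>2) / d\<^sup>2"
  using assms by (simp add: power_divide diff_divide_distrib)

lemma arcosh_reflection_identity:
  fixes \<rho> :: real
  assumes "0 \<le> \<rho>" "\<rho> < 1"
  shows "(1 + \<rho>\<^sup>2) / (1 - \<rho>\<^sup>2) + sqrt (((1 + \<rho>\<^sup>2) / (1 - \<rho>\<^sup>2))\<^sup>2 - 1) = (1 + \<rho>) / (1 - \<rho>)"
proof -
  have d: "1 - \<rho>\<^sup>2 > 0" using assms by (simp add: power_less_one_iff abs_square_less_1)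
  have "((1 + \<rho>\<^sup>2) / (1 - \<rho>\<^sup>2))\<^sup>2 - 1 = ((1 + \<rho>\<^sup>2)\<^sup>2 - (1 - \<rho>\<^sup>2)\<^sup>2) / (1 - \<rho>\<^sup>2)\<^sup>2"
    by (rule square_ratio_minus_one) (use d in simp)
  also have "(1 + \<rho>\<^sup>2)\<^sup>2 - (1 - \<rho>\<^sup>2)\<^sup>2 = (2 * \<rho>)\<^sup>2"
    by (simp add: power2_eq_square algebra_simps)
  also have "(2 * \<rho>)\<^sup>2 / (1 - \<rho>\<^sup>2)\<^sup>2 = (2 * \<rho> / (1 - \<rho>\<^sup>2))\<^sup>2"
    by (simp only: power_divide)
  finally have "sqrt (((1 + \<rho>\<^sup>2) / (1 - \<rho>\<^sup>2))\<^sup>2 - 1) = 2 * \<rho> / (1 - \<rho>\<^sup>2)"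
    using d assms(1) by simp
  moreover have "1 - \<rho>\<^sup>2 = (1 - \<rho>) * (1 + \<rho>)" "1 + \<rho>\<^sup>2 + 2 * \<rho> = (1 + \<rho>) * (1 + \<rho>)"
    by (simp_all add: power2_eq_square algebra_simps)
  moreover have "1 - \<rho> \<noteq> 0" "1 + \<rho> \<noteq> 0" using assms by auto
  ultimately show ?thesis by (simp add: add_divide_distrib[symmetric])
qed

lemma sech_square_exp: "(sech \<Theta>)\<^sup>2 = 4 * exp (2 * \<Theta>) / (exp (2 * \<Theta>) + 1)\<^sup>2"
proof -
  define a where "a = exp \<Theta>"
  have a: "a > 0" by (simp add: a_def)
  have "cosh \<Theta> = (a\<^sup>2 + 1) / (2 * a)"
    unfolding cosh_def a_def using a[unfolded a_def]
    by (simp add: exp_minus field_simps power2_eq_square)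
  then have "sech \<Theta> = 2 * a / (a\<^sup>2 + 1)" unfolding sech_def by simp
  moreover have "exp (2 * \<Theta>) = a\<^sup>2" by (simp add: a_def exp_double)
  ultimately show ?thesis by (simp add: power2_eq_square)
qed

lemma transmission_from_reflection_bound:
  fixes \<rho> A :: real
  assumes r0: "0 \<le> \<rho>" and r1: "\<rho> < 1" and A: "A > 0" and h: "(1 + \<rho>) / (1 - \<rho>) \<le> A"
  shows "1 - \<rho>\<^sup>2 \<ge> 4 * A / (A + 1)\<^sup>2"
proof -
  have "1 + \<rho> \<le> A * (1 - \<rho>)" using h r1 by (simp add: pos_divide_le_eq)
  then have "\<rho> * (A + 1) \<le> A - 1" by (simp add: algebra_simps)
  then have "\<rho> \<le> (A - 1) / (A + 1)" using A by (simp add: pos_le_divide_eq)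
  then have "\<rho>\<^sup>2 \<le> ((A - 1) / (A + 1))\<^sup>2" by (rule power_mono[OF _ r0])
  moreover have "((A - 1) / (A + 1))\<^sup>2 - 1 = ((A - 1)\<^sup>2 - (A + 1)\<^sup>2) / (A + 1)\<^sup>2"
    by (rule square_ratio_minus_one) (use A in simp)
  moreover have "(A - 1)\<^sup>2 - (A + 1)\<^sup>2 = - (4 * A)" by (simp add: power2_eq_square algebra_simps)
  ultimately show ?thesis by simp
qed

lemma cnj_mult_has_derivative:
  fixes f g :: "real \<Rightarrow> complex"
  assumes f: "(f has_vector_derivative f') (at x)" and g: "(g has_vector_derivative g') (at x)"
  shows "((\<lambda>x. Re (cnj (f x) * g x)) has_real_derivative Re (cnj f' * g x + cnj (f x) * g')) (at x)"
    and "((\<lambda>x. Im (cnj (f x) * g x)) has_real_derivative Im (cnj f' * g x + cnj (f x) * g')) (at x)"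
proof -
  have "((\<lambda>x. cnj (f x) * g x) has_vector_derivative cnj (f x) * g' + cnj f' * g x) (at x)"
    by (rule has_vector_derivative_mult[OF has_vector_derivative_cnj[OF f] g])
  then show "((\<lambda>x. Re (cnj (f x) * g x)) has_real_derivative Re (cnj f' * g x + cnj (f x) * g')) (at x)"
    and "((\<lambda>x. Im (cnj (f x) * g x)) has_real_derivative Im (cnj f' * g x + cnj (f x) * g')) (at x)"
    by (simp_all add: has_vector_derivative_complex_iff add.commute)
qed

lemma exp_linear_has_vector_derivative:
  fixes c :: complex and k :: real
  shows "((\<lambda>x. exp (c * complex_of_real (k * x))) has_vector_derivative
            (c * of_real k * exp (c * complex_of_real (k * x)))) (at x)"
proof -
  have "((\<lambda>z. exp ((c * of_real k) * z)) has_field_derivative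
          ((c * of_real k) * exp ((c * of_real k) * of_real x))) (at (of_real x))"
    by (auto intro!: derivative_eq_intros)
  from has_vector_derivative_real_field[OF this]
  show ?thesis by (simp add: algebra_simps)
qed

definition plane_wave :: "complex \<Rightarrow> complex \<Rightarrow> real \<Rightarrow> real \<Rightarrow> complex" where
  "plane_wave a b k x = a * exp (\<i> * of_real (k * x)) + b * exp (- \<i> * of_real (k * x))"

definition plane_wave' :: "complex \<Rightarrow> complex \<Rightarrow> real \<Rightarrow> real \<Rightarrow> complex" where
  "plane_wave' a b k x = \<i> * of_real k * (a * exp (\<i> * of_real (k * x)) - b * exp (- \<i> * of_real (k * x)))"

lemma plane_wave_derivatives:
  shows "(plane_wave a b k has_vector_derivative plane_wave' a b k x) (at x)"
    and "(plane_wave' a b k has_vector_derivative - (of_real (k\<^sup>2) * plane_wave a b k x)) (at x)"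
proof -
  note e = exp_linear_has_vector_derivative[of "\<i>" k x]
  note f = exp_linear_has_vector_derivative[of "- \<i>" k x]
  have "(plane_wave a b k has_vector_derivative a * (\<i> * of_real k * exp (\<i> * of_real (k * x)))
      + b * (- \<i> * of_real k * exp (- \<i> * of_real (k * x)))) (at x)"
    unfolding plane_wave_def[abs_def] by (intro derivative_intros e f)
  then show "(plane_wave a b k has_vector_derivative plane_wave' a b k x) (at x)"
    by (simp add: plane_wave'_def algebra_simps)
  have "(plane_wave' a b k has_vector_derivative \<i> * of_real k * (a * (\<i> * of_real k * exp (\<i> * of_real (k * x)))
      - b * (- \<i> * of_real k * exp (- \<i> * of_real (k * x))))) (at x)"
    unfolding plane_wave'_def[abs_def] by (intro derivative_intros e f)
  then show "(plane_wave' a b k has_vector_derivative - (of_real (k\<^sup>2) * plane_wave a b k x)) (at x)"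
    by (simp add: plane_wave_def power2_eq_square algebra_simps)
qed

lemma plane_wave_bound: "norm (plane_wave a b k x) \<le> norm a + norm b"
proof -
  have "norm (plane_wave a b k x) \<le> norm (a * exp (\<i> * of_real (k * x))) + norm (b * exp (- \<i> * of_real (k * x)))"
    unfolding plane_wave_def by (rule norm_triangle_ineq)
  then show ?thesis by (simp add: norm_mult)
qed

lemma plane_wave_components:
  shows "plane_wave' a b k x + \<i> * of_real k * plane_wave a b k x = 2 * \<i> * of_real k * a * exp (\<i> * of_real (k * x))"
    and "plane_wave' a b k x - \<i> * of_real k * plane_wave a b k x = - 2 * \<i> * of_real k * b * exp (- \<i> * of_real (k * x))"
  by (simp_all add: plane_wave_def plane_wave'_def algebra_simps)

lemma tendsto_norm_asymptotic:
  fixes f g :: "real \<Rightarrow> 'a::real_normed_vector"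
  assumes lim: "((\<lambda>x. f x - g x) \<longlongrightarrow> 0) F" and g: "\<And>x. norm (g x) = c"
  shows "((\<lambda>x. norm (f x)) \<longlongrightarrow> c) F"
proof -
  have "((\<lambda>x. norm (f x) - c) \<longlongrightarrow> 0) F"
  proof (rule Lim_null_comparison)
    show "eventually (\<lambda>x. norm (norm (f x) - c) \<le> norm (f x - g x)) F"
      using norm_triangle_ineq3[of "f _" "g _"] by (simp add: g)
    show "((\<lambda>x. norm (f x - g x)) \<longlongrightarrow> 0) F" using tendsto_norm_zero[OF lim] .
  qed
  then show ?thesis by (rule LIM_zero_cancel)
qed

text \<open>Polarisation identities behind flux and energy: for \<open>w = u'\<close>, \<open>v = u\<close> the two
  combinations \<open>u' \<plusminus> i k u\<close> measure the right- and left-moving wave amplitudes.\<close>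
lemma cmod_plus_minus_identities:
  fixes v w :: complex and k :: real
  shows "(cmod (w + \<i> * of_real k * v))\<^sup>2 - (cmod (w - \<i> * of_real k * v))\<^sup>2 = 4 * k * Im (cnj v * w)"
    and "(cmod (w + \<i> * of_real k * v))\<^sup>2 + (cmod (w - \<i> * of_real k * v))\<^sup>2
           = 2 * ((cmod w)\<^sup>2 + k\<^sup>2 * (cmod v)\<^sup>2)"
  unfolding cmod_power2 by (simp_all add: algebra_simps power2_eq_square)

section \<open>Quadratic quantities of a solution of \<open>u'' + q u = 0\<close>\<close>

locale schroedinger_solution =
  fixes q :: "real \<Rightarrow> real" and u u' :: "real \<Rightarrow> complex"
  assumes u_deriv: "\<And>x. (u has_vector_derivative u' x) (at x)"
    and u'_deriv: "\<And>x. (u' has_vector_derivative (- (complex_of_real (q x) * u x))) (at x)"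
begin

text \<open>\<open>U = |u|\<^sup>2\<close>, \<open>V = |u'|\<^sup>2\<close>, \<open>P = Re (cnj u \<cdot> u')\<close> and the flux \<open>J = Im (cnj u \<cdot> u')\<close>,
  which is constant (it is the Wronskian of \<open>u\<close> and \<open>cnj u\<close> up to a factor).\<close>
definition "U x = (cmod (u x))\<^sup>2"
definition "V x = (cmod (u' x))\<^sup>2"
definition "P x = Re (cnj (u x) * u' x)"
definition "J = Im (cnj (u 0) * u' 0)"

lemma U_nonneg: "U x \<ge> 0" and V_nonneg: "V x \<ge> 0"
  by (simp_all add: U_def V_def)

lemma U_deriv: "(U has_real_derivative 2 * P x) (at x)"
proof -
  have "U = (\<lambda>x. Re (cnj (u x) * u x))"
    unfolding fun_eq_iff U_def cmod_power2 by (simp add: power2_eq_square)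
  then show ?thesis
    using cnj_mult_has_derivative(1)[OF u_deriv u_deriv, of x] by (simp add: P_def algebra_simps)
qed

lemma V_deriv: "(V has_real_derivative - 2 * q x * P x) (at x)"
proof -
  have "V = (\<lambda>x. Re (cnj (u' x) * u' x))"
    unfolding fun_eq_iff V_def cmod_power2 by (simp add: power2_eq_square)
  then show ?thesis
    using cnj_mult_has_derivative(1)[OF u'_deriv u'_deriv, of x] by (simp add: P_def algebra_simps)
qed

lemma U_cont: "isCont U x" and V_cont: "isCont V x"
  using DERIV_isCont[OF U_deriv] DERIV_isCont[OF V_deriv] by auto

text \<open>Conservation of the flux: \<open>(cnj u \<cdot> u')' = |u'|\<^sup>2 - q |u|\<^sup>2\<close> is real.\<close>
lemma flux_const: "Im (cnj (u x) * u' x) = J"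
proof -
  have "\<forall>x. ((\<lambda>x. Im (cnj (u x) * u' x)) has_real_derivative 0) (at x)"
    using cnj_mult_has_derivative(2)[OF u_deriv u'_deriv] by (simp add: algebra_simps)
  then show ?thesis unfolding J_def by (rule DERIV_isconst_all)
qed

lemma P_flux_identity: "(P x)\<^sup>2 + J\<^sup>2 = U x * V x"
proof -
  have "(P x)\<^sup>2 + J\<^sup>2 = (cmod (cnj (u x) * u' x))\<^sup>2"
    unfolding P_def flux_const[of x, symmetric] by (simp add: cmod_power2)
  also have "\<dots> = U x * V x" by (simp add: U_def V_def norm_mult power_mult_distrib)
  finally show ?thesis .
qed

lemma P_bound: "2 * \<bar>P x\<bar> \<le> U x + V x"
proof -
  have "(P x)\<^sup>2 \<le> U x * V x" using P_flux_identity[of x] zero_le_power2[of J] by linarith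
  moreover have "4 * (U x * V x) \<le> (U x + V x)\<^sup>2"
    using zero_le_power2[of "U x - V x"] by (simp add: power2_eq_square algebra_simps)
  ultimately have "(2 * P x)\<^sup>2 \<le> (U x + V x)\<^sup>2" by (simp add: power_mult_distrib)
  then have "\<bar>2 * P x\<bar> \<le> \<bar>U x + V x\<bar>" by (simp add: abs_le_square_iff)
  then show ?thesis using U_nonneg[of x] V_nonneg[of x] by (simp add: abs_mult)
qed

text \<open>Uniqueness for the initial value problem (Gronwall): with \<open>q\<close> bounded, a solution
  vanishing together with its derivative at \<open>X\<close> vanishes to the left of \<open>X\<close>.\<close>
lemma vanishes_left_of_zero:
  assumes Q: "\<And>x. \<bar>q x\<bar> \<le> Q" and UX: "U X = 0" and VX: "V X = 0" and y: "y \<le> X"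
  shows "u y = 0 \<and> u' y = 0"
proof -
  define C where "C = 1 + Q"
  define G where "G t = (U t + V t) * exp (C * t)" for t
  have "G y \<le> G X"
  proof (rule DERIV_nonneg_imp_nondecreasing[OF y])
    fix x
    have "((\<lambda>t. exp (C * t)) has_real_derivative exp (C * x) * C) (at x)"
      by (auto intro!: derivative_eq_intros)
    from DERIV_mult[OF DERIV_add[OF U_deriv V_deriv] this]
    have "(G has_real_derivative ((1 - q x) * (2 * P x) + C * (U x + V x)) * exp (C * x)) (at x)"
      unfolding G_def by (simp add: algebra_simps)
    moreover have "\<bar>(1 - q x) * (2 * P x)\<bar> \<le> C * (U x + V x)"
      unfolding abs_mult
      by (rule mult_mono) (use Q[of x] P_bound[of x] U_nonneg[of x] V_nonneg[of x] in \<open>auto simp: C_def\<close>)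
    then have "0 \<le> (1 - q x) * (2 * P x) + C * (U x + V x)"
      unfolding abs_le_iff by linarith
    ultimately show "\<exists>D. (G has_real_derivative D) (at x) \<and> D \<ge> 0" by force
  qed
  then have "U y + V y \<le> 0" by (simp add: G_def UX VX mult_le_0_iff)
  then have "U y = 0" "V y = 0" using U_nonneg[of y] V_nonneg[of y] by linarith+
  then show ?thesis by (simp add: U_def V_def)
qed

lemma plane_wave_deviation_derivatives:
  shows "((\<lambda>x. u x - plane_wave a b k x) has_vector_derivative u' x - plane_wave' a b k x) (at x)"
    and "((\<lambda>x. u' x - plane_wave' a b k x) has_vector_derivative
          - (of_real (q x - k\<^sup>2) * u x) - of_real (k\<^sup>2) * (u x - plane_wave a b k x)) (at x)"
proof -
  show "((\<lambda>x. u x - plane_wave a b k x) has_vector_derivative u' x - plane_wave' a b k x) (at x)"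
    by (intro derivative_intros u_deriv plane_wave_derivatives)
  have "((\<lambda>x. u' x - plane_wave' a b k x) has_vector_derivative
      - (of_real (q x) * u x) - - (of_real (k\<^sup>2) * plane_wave a b k x)) (at x)"
    by (intro derivative_intros u'_deriv plane_wave_derivatives)
  then show "((\<lambda>x. u' x - plane_wave' a b k x) has_vector_derivative
      - (of_real (q x - k\<^sup>2) * u x) - of_real (k\<^sup>2) * (u x - plane_wave a b k x)) (at x)"
    by (simp add: algebra_simps)
qed

text \<open>At an end \<open>\<plusminus>\<infinity>\<close> where \<open>q \<rightarrow> k\<^sup>2\<close>, if \<open>u\<close> is asymptotic to a plane wave then \<open>u'\<close>
  is asymptotic to its derivative: the deviation and its second derivative tend to zero.\<close>
lemma derivative_asymptotics:
  fixes F :: "real filter"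
  assumes F: "F = at_top \<or> F = at_bot" and ql: "(q \<longlongrightarrow> k\<^sup>2) F"
    and ul: "((\<lambda>x. u x - plane_wave a b k x) \<longlongrightarrow> 0) F"
  shows "((\<lambda>x. u' x - plane_wave' a b k x) \<longlongrightarrow> 0) F"
proof -
  have "eventually (\<lambda>x. norm (u x - plane_wave a b k x) < 1) F" using tendstoD[OF ul, of 1] by simp
  then have u_bounded: "eventually (\<lambda>x. norm (u x) \<le> 1 + norm a + norm b) F"
  proof eventually_elim
    case (elim x)
    have "norm (u x) \<le> norm (u x - plane_wave a b k x) + norm (plane_wave a b k x)"
      using norm_triangle_ineq[of "u x - plane_wave a b k x" "plane_wave a b k x"] by simp
    then show ?case using elim plane_wave_bound[of a b k x] by linarith
  qed
  have "((\<lambda>x. of_real (q x - k\<^sup>2) * u x) \<longlongrightarrow> 0) F"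
  proof (rule Lim_null_comparison)
    show "eventually (\<lambda>x. norm (of_real (q x - k\<^sup>2) * u x) \<le> \<bar>q x - k\<^sup>2\<bar> * (1 + norm a + norm b)) F"
      using u_bounded
      by eventually_elim (simp only: norm_mult norm_of_real, rule mult_left_mono, auto)
    have "((\<lambda>x. q x - k\<^sup>2) \<longlongrightarrow> 0) F" using ql by (simp add: LIM_zero)
    then show "((\<lambda>x. \<bar>q x - k\<^sup>2\<bar> * (1 + norm a + norm b)) \<longlongrightarrow> 0) F"
      by (intro tendsto_mult_left_zero tendsto_rabs_zero)
  qed
  then have "((\<lambda>x. - (of_real (q x - k\<^sup>2) * u x) - of_real (k\<^sup>2) * (u x - plane_wave a b k x)) \<longlongrightarrow> 0) F"
    using tendsto_diff[OF tendsto_minus[of _ 0] tendsto_mult_right_zero[OF ul]] by simp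
  from tendsto_zero_derivative[OF F plane_wave_deviation_derivatives ul this]
  show ?thesis .
qed

lemma amplitude_limits:
  fixes F :: "real filter"
  assumes F: "F = at_top \<or> F = at_bot" and k: "k > 0" and ql: "(q \<longlongrightarrow> k\<^sup>2) F"
    and ul: "((\<lambda>x. u x - plane_wave a b k x) \<longlongrightarrow> 0) F"
  shows "((\<lambda>x. cmod (u' x + \<i> * of_real k * u x)) \<longlongrightarrow> 2 * k * cmod a) F"
    and "((\<lambda>x. cmod (u' x - \<i> * of_real k * u x)) \<longlongrightarrow> 2 * k * cmod b) F"
proof -
  note d0 = tendsto_mult_right_zero[OF ul, of "\<i> * of_real k"]
  note d'0 = derivative_asymptotics[OF F ql ul]
  have "(u' x - plane_wave' a b k x) + \<i> * of_real k * (u x - plane_wave a b k x)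
      = (u' x + \<i> * of_real k * u x) - 2 * \<i> * of_real k * a * exp (\<i> * of_real (k * x))" for x
    using plane_wave_components(1)[of a b k x] by (simp add: algebra_simps)
  with tendsto_add[OF d'0 d0]
  have "((\<lambda>x. (u' x + \<i> * of_real k * u x) - 2 * \<i> * of_real k * a * exp (\<i> * of_real (k * x))) \<longlongrightarrow> 0) F"
    by simp
  then show "((\<lambda>x. cmod (u' x + \<i> * of_real k * u x)) \<longlongrightarrow> 2 * k * cmod a) F"
    by (rule tendsto_norm_asymptotic) (use k in \<open>simp add: norm_mult\<close>)
  have "(u' x - plane_wave' a b k x) - \<i> * of_real k * (u x - plane_wave a b k x)
      = (u' x - \<i> * of_real k * u x) - - 2 * \<i> * of_real k * b * exp (- \<i> * of_real (k * x))" for x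
    using plane_wave_components(2)[of a b k x] by (simp add: algebra_simps)
  with tendsto_diff[OF d'0 d0]
  have "((\<lambda>x. (u' x - \<i> * of_real k * u x) - - 2 * \<i> * of_real k * b * exp (- \<i> * of_real (k * x))) \<longlongrightarrow> 0) F"
    by simp
  then show "((\<lambda>x. cmod (u' x - \<i> * of_real k * u x)) \<longlongrightarrow> 2 * k * cmod b) F"
    by (rule tendsto_norm_asymptotic) (use k in \<open>simp add: norm_mult\<close>)
qed

lemma plane_wave_limits:
  fixes F :: "real filter"
  assumes F: "F = at_top \<or> F = at_bot" and k: "k > 0" and ql: "(q \<longlongrightarrow> k\<^sup>2) F"
    and ul: "((\<lambda>x. u x - plane_wave a b k x) \<longlongrightarrow> 0) F"
  shows "J = k * ((cmod a)\<^sup>2 - (cmod b)\<^sup>2)"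
    and "((\<lambda>x. V x + k\<^sup>2 * U x) \<longlongrightarrow> 2 * k\<^sup>2 * ((cmod a)\<^sup>2 + (cmod b)\<^sup>2)) F"
proof -
  note plus = tendsto_power[OF amplitude_limits(1)[OF F k ql ul], of 2]
  note minus = tendsto_power[OF amplitude_limits(2)[OF F k ql ul], of 2]
  have "((\<lambda>x. 4 * k * J) \<longlongrightarrow> (2 * k * cmod a)\<^sup>2 - (2 * k * cmod b)\<^sup>2) F"
    using tendsto_diff[OF plus minus] unfolding cmod_plus_minus_identities(1) flux_const .
  then have "4 * k * J = (2 * k * cmod a)\<^sup>2 - (2 * k * cmod b)\<^sup>2"
    using F tendsto_const_iff by (metis trivial_limit_at_bot_linorder trivial_limit_at_top_linorder)
  also have "\<dots> = 4 * k * (k * ((cmod a)\<^sup>2 - (cmod b)\<^sup>2))"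
    by (simp add: power2_eq_square algebra_simps)
  finally show "J = k * ((cmod a)\<^sup>2 - (cmod b)\<^sup>2)"
    using k by simp
  have energy: "V x + k\<^sup>2 * U x
      = ((cmod (u' x + \<i> * of_real k * u x))\<^sup>2 + (cmod (u' x - \<i> * of_real k * u x))\<^sup>2) / 2" for x
    using cmod_plus_minus_identities(2)[of "u' x" k "u x"] by (simp add: U_def V_def)
  have "((\<lambda>x. V x + k\<^sup>2 * U x) \<longlongrightarrow> ((2 * k * cmod a)\<^sup>2 + (2 * k * cmod b)\<^sup>2) / 2) F"
    unfolding energy by (intro tendsto_divide plus minus tendsto_add tendsto_const) simp
  moreover have "((2 * k * cmod a)\<^sup>2 + (2 * k * cmod b)\<^sup>2) / 2 = 2 * k\<^sup>2 * ((cmod a)\<^sup>2 + (cmod b)\<^sup>2)"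
    by (simp add: power2_eq_square algebra_simps)
  ultimately show "((\<lambda>x. V x + k\<^sup>2 * U x) \<longlongrightarrow> 2 * k\<^sup>2 * ((cmod a)\<^sup>2 + (cmod b)\<^sup>2)) F"
    by simp
qed

end

section \<open>The scattering problem with a single-well potential\<close>

text \<open>The hypotheses of the main theorem, with \<open>q = k\<^sup>2\<close>, \<open>kp = k\<^sub>+\<^sub>\<infinity>\<close>, \<open>km = k\<^sub>-\<^sub>\<infinity>\<close>:
  \<open>q\<close> decreases up to \<open>x\<^sub>0\<close> and increases afterwards, and \<open>u\<close> is the scattering solution
  with reflection coefficient \<open>r\<close> and transmission coefficient \<open>\<tau>\<close>.\<close>
locale scattering = schroedinger_solution +
  fixes kp km x0 \<Delta> :: real and r \<tau> :: complex
  assumes kp_pos: "kp > 0" and km_pos: "km > 0"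
    and lim_top: "(q \<longlongrightarrow> kp\<^sup>2) at_top"
    and lim_bot: "(q \<longlongrightarrow> km\<^sup>2) at_bot"
    and pC1: "q piecewise_C1_differentiable_on UNIV"
    and noninc: "\<And>x y. x \<le> y \<Longrightarrow> y \<le> x0 \<Longrightarrow> q y \<le> q x"
    and nondec: "\<And>x y. x0 \<le> x \<Longrightarrow> x \<le> y \<Longrightarrow> q x \<le> q y"
    and Delta_pos: "\<Delta> > 0"
    and Delta_hi: "\<Delta>\<^sup>2 \<le> min (kp\<^sup>2) (km\<^sup>2)"
    and asym_bot: "((\<lambda>x. u x - (exp (\<i> * complex_of_real (km * x))
                        + r * exp (- \<i> * complex_of_real (km * x)))) \<longlongrightarrow> 0) at_bot"
    and asym_top: "((\<lambda>x. u x - \<tau> * exp (\<i> * complex_of_real (kp * x))) \<longlongrightarrow> 0) at_top"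
begin

lemma q_isCont: "isCont q x"
  using pC1 by (simp add: piecewise_C1_differentiable_on_def continuous_on_eq_continuous_at)

lemma q_derivative_off_finite:
  obtains S q' where "finite S" "\<And>x. x \<notin> S \<Longrightarrow> (q has_real_derivative q' x) (at x)"
proof -
  obtain S where S: "finite S" "q C1_differentiable_on UNIV - S"
    using pC1 by (auto simp: piecewise_C1_differentiable_on_def)
  then obtain D where "\<And>x. x \<in> UNIV - S \<Longrightarrow> (q has_vector_derivative D x) (at x)"
    by (auto simp: C1_differentiable_on_def)
  then show ?thesis
    using that[OF S(1)] by (auto simp: has_real_derivative_iff_has_vector_derivative)
qed

lemma q_min: "q x0 \<le> q x"
  by (cases "x \<le> x0") (auto intro: noninc nondec)

lemma q_le_km: "x \<le> x0 \<Longrightarrow> q x \<le> km\<^sup>2"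
  by (rule tendsto_lowerbound[OF lim_bot])
     (auto simp: eventually_at_bot_linorder intro!: exI[of _ x] noninc)

lemma q_le_kp: "x0 \<le> x \<Longrightarrow> q x \<le> kp\<^sup>2"
  by (rule tendsto_lowerbound[OF lim_top])
     (auto simp: eventually_at_top_linorder intro!: exI[of _ x] nondec)

lemma q_bounded: "\<bar>q x\<bar> \<le> \<bar>q x0\<bar> + kp\<^sup>2 + km\<^sup>2"
proof -
  have "q x \<le> kp\<^sup>2 + km\<^sup>2" using q_le_km[of x] q_le_kp[of x]
    by (cases "x \<le> x0") (auto simp: add_increasing add_increasing2)
  then show ?thesis using q_min[of x] zero_le_power2[of kp] zero_le_power2[of km] by linarith
qed

lemma q_deriv_nonpos_left:
  assumes "(q has_real_derivative D) (at x)" "x < x0"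
  shows "D \<le> 0"
proof -
  have "mono_on {..x0} (\<lambda>x. - q x)" by (auto intro!: mono_onI noninc)
  from mono_on_imp_deriv_nonneg[OF this DERIV_minus[OF assms(1)]] assms(2) show ?thesis by simp
qed

lemma q_deriv_nonneg_right:
  assumes "(q has_real_derivative D) (at x)" "x0 < x"
  shows "D \<ge> 0"
proof -
  have "mono_on {x0..} q" by (auto intro!: mono_onI nondec)
  from mono_on_imp_deriv_nonneg[OF this assms(1)] assms(2) show ?thesis by simp
qed

lemma transmitted_waves:
  shows "J = kp * (cmod \<tau>)\<^sup>2"
    and "((\<lambda>x. V x + kp\<^sup>2 * U x) \<longlongrightarrow> 2 * kp\<^sup>2 * (cmod \<tau>)\<^sup>2) at_top"
  using plane_wave_limits[of at_top kp \<tau> 0] kp_pos lim_top asym_top by (simp_all add: plane_wave_def)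

lemma reflected_waves:
  shows "J = km * (1 - (cmod r)\<^sup>2)"
    and "((\<lambda>x. V x + km\<^sup>2 * U x) \<longlongrightarrow> 2 * km\<^sup>2 * (1 + (cmod r)\<^sup>2)) at_bot"
  using plane_wave_limits[of at_bot km 1 r] km_pos lim_bot asym_bot by (simp_all add: plane_wave_def)

text \<open>The quantity \<open>V + q U\<close> is nondecreasing to the right of \<open>x\<^sub>0\<close>: away from the finitely
  many corners of \<open>q\<close> its derivative is \<open>q' U \<ge> 0\<close>.\<close>
lemma energy_mono_right:
  assumes "x0 \<le> y" "y \<le> z"
  shows "V y + q y * U y \<le> V z + q z * U z"
proof -
  obtain S q' where S: "finite S" "\<And>x. x \<notin> S \<Longrightarrow> (q has_real_derivative q' x) (at x)"
    using q_derivative_off_finite by blast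
  show ?thesis
  proof (rule nondecreasing_off_finite[OF assms(2) S(1)])
    show "continuous_on {y..z} (\<lambda>x. V x + q x * U x)"
      by (intro continuous_at_imp_continuous_on ballI continuous_intros U_cont V_cont q_isCont)
    fix x assume x: "x \<in> {y<..<z}" "x \<notin> S"
    have "((\<lambda>x. V x + q x * U x) has_real_derivative
        - 2 * q x * P x + (q' x * U x + 2 * P x * q x)) (at x)"
      by (rule DERIV_add[OF V_deriv DERIV_mult[OF S(2)[OF x(2)] U_deriv]])
    moreover have "q' x \<ge> 0" using q_deriv_nonneg_right[OF S(2)[OF x(2)]] x assms by auto
    ultimately show "\<exists>D. ((\<lambda>x. V x + q x * U x) has_real_derivative D) (at x) \<and> D \<ge> 0"
      using U_nonneg[of x] by (intro exI[of _ "q' x * U x"]) simp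
  qed
qed

lemma energy_vanishes_without_transmission:
  assumes t0: "\<tau> = 0"
  shows "((\<lambda>x. V x + q x * U x) \<longlongrightarrow> 0) at_top"
proof -
  have kp2: "kp\<^sup>2 > 0" using kp_pos by simp
  have energy0: "((\<lambda>x. V x + kp\<^sup>2 * U x) \<longlongrightarrow> 0) at_top" using transmitted_waves(2) t0 by simp
  have V0: "(V \<longlongrightarrow> 0) at_top"
  proof (rule Lim_null_comparison[OF always_eventually energy0], intro allI)
    show "norm (V x) \<le> V x + kp\<^sup>2 * U x" for x using U_nonneg[of x] V_nonneg[of x] by simp
  qed
  have "((\<lambda>x. (V x + kp\<^sup>2 * U x) / kp\<^sup>2) \<longlongrightarrow> 0) at_top"
    using tendsto_divide[OF energy0 tendsto_const[of "kp\<^sup>2"]] kp2 by simp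
  moreover have "norm (U x) \<le> (V x + kp\<^sup>2 * U x) / kp\<^sup>2" for x
    using kp2 U_nonneg[of x] V_nonneg[of x] by (simp add: pos_le_divide_eq mult.commute)
  ultimately have U0: "(U \<longlongrightarrow> 0) at_top"
    using Lim_null_comparison[where g="\<lambda>x. (V x + kp\<^sup>2 * U x) / kp\<^sup>2" and f=U] by simp
  define Q where "Q = \<bar>q x0\<bar> + kp\<^sup>2 + km\<^sup>2"
  have "((\<lambda>x. q x * U x) \<longlongrightarrow> 0) at_top"
  proof (rule Lim_null_comparison[where g="\<lambda>x. Q * U x"])
    show "eventually (\<lambda>x. norm (q x * U x) \<le> Q * U x) at_top"
      using q_bounded U_nonneg unfolding Q_def
      by (intro always_eventually allI) (auto simp: abs_mult intro: mult_right_mono)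
  qed (rule tendsto_mult_right_zero[OF U0])
  from tendsto_add[OF V0 this] show ?thesis by simp
qed

text \<open>Consequently, without transmission \<open>V + q U \<le> 0\<close> to the right of \<open>x\<^sub>0\<close>, which forces
  \<open>U = V = 0\<close> at any point there with \<open>q > 0\<close>.\<close>
lemma no_transmission_imp_zero:
  assumes t0: "\<tau> = 0"
  obtains X where "U X = 0" "V X = 0"
proof -
  have nonpos: "V y + q y * U y \<le> 0" if "x0 \<le> y" for y
    by (rule tendsto_lowerbound[OF energy_vanishes_without_transmission[OF t0]])
       (auto simp: eventually_at_top_linorder intro!: exI[of _ y] energy_mono_right that)
  have "eventually (\<lambda>x. q x > 0 \<and> x \<ge> x0) at_top"
    using order_tendstoD(1)[OF lim_top, of 0] kp_pos eventually_ge_at_top[of x0]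
    by (auto intro: eventually_conj)
  then obtain X where X: "q X > 0" "X \<ge> x0"
    by (metis (mono_tags, lifting) eventually_happens' trivial_limit_at_top_linorder)
  have "V X + q X * U X \<le> 0" using nonpos[OF X(2)] .
  moreover have "q X * U X \<ge> 0" using X(1) U_nonneg[of X] by simp
  ultimately have "V X = 0" "q X * U X = 0" using V_nonneg[of X] by linarith+
  with X(1) show ?thesis using that by simp
qed

text \<open>By uniqueness, \<open>u\<close> would then vanish on a half-line, contradicting the incident wave.\<close>
lemma transmission_nonzero: "\<tau> \<noteq> 0"
proof
  assume "\<tau> = 0"
  then obtain X where "U X = 0" "V X = 0" by (rule no_transmission_imp_zero)
  then have "u y = 0 \<and> u' y = 0" if "y \<le> X" for y
    using vanishes_left_of_zero[OF q_bounded _ _ that] by blast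
  then have "eventually (\<lambda>x. V x + km\<^sup>2 * U x \<le> 0) at_bot"
    unfolding eventually_at_bot_linorder by (intro exI[of _ X] allI impI) (simp add: U_def V_def)
  from tendsto_upperbound[OF reflected_waves(2) this] have "2 * km\<^sup>2 * (1 + (cmod r)\<^sup>2) \<le> 0"
    by simp
  moreover have "2 * km\<^sup>2 * (1 + (cmod r)\<^sup>2) > 0" using km_pos by (simp add: add_pos_nonneg)
  ultimately show False by linarith
qed

lemma flux_pos: "J > 0"
  using transmitted_waves(1) transmission_nonzero kp_pos by simp

lemma reflection_lt_1: "cmod r < 1"
proof -
  have "km * (1 - (cmod r)\<^sup>2) > 0" using flux_pos reflected_waves(1) by simp
  then have "(cmod r)\<^sup>2 < 1" using km_pos by (simp add: zero_less_mult_iff)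
  then show ?thesis by (simp add: power_less_one_iff abs_square_less_1)
qed

lemma reflection_ratio_pos: "(1 + cmod r) / (1 - cmod r) > 0"
  using reflection_lt_1 norm_ge_zero[of r] by (intro divide_pos_pos) linarith+

subsection \<open>The comparison wave number\<close>

text \<open>The comparison wave number \<open>\<phi> = g + s\<close> with \<open>g = \<surd>max(q, \<Delta>\<^sup>2)\<close> and
  \<open>s = \<surd>max(0, \<Delta>\<^sup>2 - q)\<close>: where \<open>q \<ge> \<Delta>\<^sup>2\<close> it is the local wave number \<open>\<surd>q\<close>,
  in the barrier region \<open>q < \<Delta>\<^sup>2\<close> it is \<open>\<Delta> + s\<close>; in both cases \<open>\<phi>\<^sup>2 - q = 2 s \<phi>\<close>.\<close>
definition "g x = sqrt (max (q x) (\<Delta>\<^sup>2))"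
definition "s x = sqrt (max 0 (\<Delta>\<^sup>2 - q x))"
definition "\<phi> x = g x + s x"

lemma g_ge: "g x \<ge> \<Delta>"
  unfolding g_def using Delta_pos by (metis abs_of_pos max.cobounded2 real_sqrt_abs real_sqrt_le_iff)

lemma g_pos: "g x > 0"
  using g_ge[of x] Delta_pos by linarith

lemma s_nonneg: "s x \<ge> 0"
  unfolding s_def by simp

lemma phi_pos: "\<phi> x > 0"
  unfolding \<phi>_def using g_pos[of x] s_nonneg[of x] by linarith

lemma g_s_cases:
  "(q x \<ge> \<Delta>\<^sup>2 \<and> g x = sqrt (q x) \<and> s x = 0) \<or> (q x < \<Delta>\<^sup>2 \<and> g x = \<Delta> \<and> s x = sqrt (\<Delta>\<^sup>2 - q x))"
  using Delta_pos by (cases "q x \<ge> \<Delta>\<^sup>2") (auto simp: g_def s_def max_def)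

lemma phi_square: "(\<phi> x)\<^sup>2 - q x = 2 * s x * \<phi> x"
proof (cases "q x \<ge> \<Delta>\<^sup>2")
  case True
  then have "g x = sqrt (q x)" "s x = 0" using g_s_cases[of x] by auto
  moreover have "q x \<ge> 0" using True by (meson order.trans zero_le_power2)
  ultimately show ?thesis by (simp add: \<phi>_def)
next
  case False
  then have "g x = \<Delta>" "s x = sqrt (\<Delta>\<^sup>2 - q x)" using g_s_cases[of x] by auto
  moreover have "(sqrt (\<Delta>\<^sup>2 - q x))\<^sup>2 = \<Delta>\<^sup>2 - q x" using False by simp
  ultimately show ?thesis by (simp add: \<phi>_def power2_eq_square algebra_simps)
qed

lemma g_cont: "isCont g x" and s_cont: "isCont s x" and phi_cont: "isCont \<phi> x"
  unfolding g_def s_def \<phi>_def by (intro continuous_intros q_isCont)+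

text \<open>The points where \<open>q\<close> reaches the level \<open>\<Delta>\<^sup>2\<close> without being locally constant there;
  only at these (and at the corners of \<open>q\<close>) can \<open>g\<close> and \<open>s\<close> fail to be differentiable.
  By monotonicity each side of \<open>x\<^sub>0\<close> contains at most two of them.\<close>
definition "level_edges = {t. q t = \<Delta>\<^sup>2 \<and> \<not> eventually (\<lambda>y. q y = \<Delta>\<^sup>2) (nhds t)}"

lemma level_edges_finite: "finite level_edges"
proof -
  have constant_between: "eventually (\<lambda>y. q y = \<Delta>\<^sup>2) (nhds b)"
    if "a < b" "b < c" "\<And>y. a \<le> y \<Longrightarrow> y \<le> c \<Longrightarrow> q y = \<Delta>\<^sup>2" for a b c
    unfolding eventually_nhds by (rule exI[of _ "{a<..<c}"]) (use that in auto)
  have "finite (level_edges \<inter> {..x0})"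
  proof (rule finite_if_no_three_ordered)
    fix a b c assume abc: "a \<in> level_edges \<inter> {..x0}" "b \<in> level_edges \<inter> {..x0}"
      "c \<in> level_edges \<inter> {..x0}" "a < b" "b < c"
    have "q y = \<Delta>\<^sup>2" if "a \<le> y" "y \<le> c" for y
      using noninc[of a y] noninc[of y c] abc that by (auto simp: level_edges_def)
    then show False using constant_between[of a b c] abc by (auto simp: level_edges_def)
  qed
  moreover have "finite (level_edges \<inter> {x0..})"
  proof (rule finite_if_no_three_ordered)
    fix a b c assume abc: "a \<in> level_edges \<inter> {x0..}" "b \<in> level_edges \<inter> {x0..}"
      "c \<in> level_edges \<inter> {x0..}" "a < b" "b < c"
    have "q y = \<Delta>\<^sup>2" if "a \<le> y" "y \<le> c" for y
      using nondec[of a y] nondec[of y c] abc that by (auto simp: level_edges_def)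
    then show False using constant_between[of a b c] abc by (auto simp: level_edges_def)
  qed
  ultimately have "finite (level_edges \<inter> {..x0} \<union> level_edges \<inter> {x0..})" by simp
  moreover have "level_edges = level_edges \<inter> {..x0} \<union> level_edges \<inter> {x0..}" by auto
  ultimately show ?thesis by simp
qed

lemma q_nhds: "(q \<longlongrightarrow> q t) (nhds t)"
  using q_isCont[of t] by (simp add: isCont_def tendsto_at_iff_tendsto_nhds)

lemma g_s_deriv_above:
  assumes q': "(q has_real_derivative q') (at t)" and above: "q t > \<Delta>\<^sup>2"
  shows "(g has_real_derivative inverse (g t) / 2 * q') (at t)" and "(s has_real_derivative 0) (at t)"
    and "s t = 0"
proof -
  have near: "eventually (\<lambda>y. q y > \<Delta>\<^sup>2) (nhds t)" using order_tendstoD(1)[OF q_nhds above] .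
  have qt: "q t > 0" using above Delta_pos by (meson order.strict_trans1 zero_le_power2)
  have gt: "g t = sqrt (q t)" using g_s_cases[of t] above by auto
  have "((\<lambda>y. sqrt (q y)) has_real_derivative inverse (g t) / 2 * q') (at t)"
    unfolding gt by (rule DERIV_real_sqrt[THEN DERIV_chain2, OF qt q'])
  moreover have "eventually (\<lambda>y. g y = sqrt (q y)) (nhds t)"
    using near by eventually_elim (simp add: g_def max_def)
  ultimately show "(g has_real_derivative inverse (g t) / 2 * q') (at t)"
    by (rule DERIV_eventually_eq[rotated])
  have "eventually (\<lambda>y. s y = 0) (nhds t)"
    using near by eventually_elim (simp add: s_def max_def)
  then show "(s has_real_derivative 0) (at t)" by (rule DERIV_eventually_eq) simp
  show "s t = 0" using g_s_cases[of t] above by auto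
qed

lemma g_s_deriv_below:
  assumes q': "(q has_real_derivative q') (at t)" and below: "q t < \<Delta>\<^sup>2"
  shows "(g has_real_derivative 0) (at t)" and "(s has_real_derivative inverse (s t) / 2 * (- q')) (at t)"
    and "g t = \<Delta>" and "s t > 0"
proof -
  have near: "eventually (\<lambda>y. q y < \<Delta>\<^sup>2) (nhds t)" using order_tendstoD(2)[OF q_nhds below] .
  have qt: "\<Delta>\<^sup>2 - q t > 0" using below by linarith
  have st: "s t = sqrt (\<Delta>\<^sup>2 - q t)" using g_s_cases[of t] below by auto
  have "((\<lambda>y. \<Delta>\<^sup>2 - q y) has_real_derivative - q') (at t)"
    using DERIV_diff[OF DERIV_const q'] by simp
  from DERIV_real_sqrt[THEN DERIV_chain2, OF qt this]
  have "((\<lambda>y. sqrt (\<Delta>\<^sup>2 - q y)) has_real_derivative inverse (s t) / 2 * (- q')) (at t)"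
    unfolding st .
  moreover have "eventually (\<lambda>y. s y = sqrt (\<Delta>\<^sup>2 - q y)) (nhds t)"
    using near by eventually_elim (simp add: s_def max_def)
  ultimately show "(s has_real_derivative inverse (s t) / 2 * (- q')) (at t)"
    by (rule DERIV_eventually_eq[rotated])
  have "eventually (\<lambda>y. g y = \<Delta>) (nhds t)"
    using near by eventually_elim (use Delta_pos in \<open>simp add: g_def max_def\<close>)
  then show "(g has_real_derivative 0) (at t)" by (rule DERIV_eventually_eq) simp
  show "g t = \<Delta>" using g_s_cases[of t] below by auto
  show "s t > 0" using qt st by simp
qed

lemma g_s_deriv_level:
  assumes q': "(q has_real_derivative q') (at t)" and level: "eventually (\<lambda>y. q y = \<Delta>\<^sup>2) (nhds t)"
  shows "q' = 0" and "(g has_real_derivative 0) (at t)" and "(s has_real_derivative 0) (at t)"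
    and "s t = 0"
proof -
  have "(q has_real_derivative 0) (at t)" using level by (rule DERIV_eventually_eq) simp
  then show "q' = 0" using DERIV_unique q' by blast
  have "eventually (\<lambda>y. g y = \<Delta>) (nhds t)"
    using level by eventually_elim (use Delta_pos in \<open>simp add: g_def max_def\<close>)
  then show "(g has_real_derivative 0) (at t)" by (rule DERIV_eventually_eq) simp
  have "eventually (\<lambda>y. s y = 0) (nhds t)"
    using level by eventually_elim (simp add: s_def max_def)
  then show "(s has_real_derivative 0) (at t)" by (rule DERIV_eventually_eq) simp
  show "s t = 0" using level eventually_nhds_x_imp_x by (fastforce simp: s_def)
qed

lemma g_s_derivatives:
  assumes q': "(q has_real_derivative q') (at t)" and t: "t \<notin> level_edges"
  obtains g' s' where "(g has_real_derivative g') (at t)" "(s has_real_derivative s') (at t)"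
    "(s t = 0 \<and> s' = 0 \<and> g' * (2 * g t) = q') \<or> (g t = \<Delta> \<and> g' = 0 \<and> s t > 0 \<and> s' * (2 * s t) = - q')"
proof -
  consider "q t > \<Delta>\<^sup>2" | "q t < \<Delta>\<^sup>2" | "eventually (\<lambda>y. q y = \<Delta>\<^sup>2) (nhds t)"
    using t unfolding level_edges_def by fastforce
  then show ?thesis
  proof cases
    case 1
    note d = g_s_deriv_above[OF q' 1]
    have "inverse (g t) / 2 * q' * (2 * g t) = q'" using g_pos[of t] by (simp add: field_simps)
    with d(3) show ?thesis by (intro that[OF d(1,2)]) simp
  next
    case 2
    note d = g_s_deriv_below[OF q' 2]
    have "inverse (s t) / 2 * (- q') * (2 * s t) = - q'" using d(4) by (simp add: field_simps)
    with d(3,4) show ?thesis by (intro that[OF d(1,2)]) simp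
  next
    case 3
    note d = g_s_deriv_level[OF q' 3]
    from d(1,4) show ?thesis by (intro that[OF d(2,3)]) simp
  qed
qed

subsection \<open>Growth of the normalised energy\<close>

text \<open>The normalised energy \<open>E = (V + \<phi>\<^sup>2 U) / (2 \<phi> J) \<ge> 1\<close> and its regularised
  logarithmic measure \<open>H\<^sub>\<epsilon> = ln (E + \<surd>(E\<^sup>2 - 1 + \<epsilon>))\<close>, an approximation of \<open>arcosh E\<close>.\<close>
definition "E x = (V x + (\<phi> x)\<^sup>2 * U x) / (2 * \<phi> x * J)"
definition "H \<epsilon> x = ln (E x + sqrt ((E x)\<^sup>2 - 1 + \<epsilon>))"

text \<open>\<open>(V + \<phi>\<^sup>2 U)\<^sup>2 - (2 \<phi> J)\<^sup>2\<close> is a sum of two squares (by \<open>P\<^sup>2 + J\<^sup>2 = U V\<close>); hence \<open>E \<ge> 1\<close>.\<close>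
lemma energy_decomposition:
  "(2 * \<phi> x * P x)\<^sup>2 + ((\<phi> x)\<^sup>2 * U x - V x)\<^sup>2 = (V x + (\<phi> x)\<^sup>2 * U x)\<^sup>2 - (2 * \<phi> x * J)\<^sup>2"
proof -
  have "(2 * \<phi> x * J)\<^sup>2 = 4 * (\<phi> x)\<^sup>2 * (U x * V x - (P x)\<^sup>2)"
    using P_flux_identity[of x] by (simp add: power_mult_distrib)
  then show ?thesis by (simp add: power2_eq_square algebra_simps)
qed

lemma E_ge_1: "E x \<ge> 1"
proof -
  have D: "2 * \<phi> x * J > 0" using phi_pos[of x] flux_pos by simp
  have "(2 * \<phi> x * J)\<^sup>2 \<le> (V x + (\<phi> x)\<^sup>2 * U x)\<^sup>2"
    using energy_decomposition[of x] zero_le_power2[of "2 * \<phi> x * P x"]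
      zero_le_power2[of "(\<phi> x)\<^sup>2 * U x - V x"] by linarith
  moreover have "V x + (\<phi> x)\<^sup>2 * U x \<ge> 0" using U_nonneg[of x] V_nonneg[of x] by simp
  ultimately have "2 * \<phi> x * J \<le> V x + (\<phi> x)\<^sup>2 * U x" by (rule power2_le_imp_le)
  then show ?thesis unfolding E_def using D by simp
qed

lemma energy_decomposition_E:
  "(2 * \<phi> x * P x)\<^sup>2 + ((\<phi> x)\<^sup>2 * U x - V x)\<^sup>2 = (2 * \<phi> x * J)\<^sup>2 * ((E x)\<^sup>2 - 1)"
proof -
  have "V x + (\<phi> x)\<^sup>2 * U x = (2 * \<phi> x * J) * E x"
    unfolding E_def using phi_pos[of x] flux_pos by simp
  then show ?thesis unfolding energy_decomposition by (simp add: power_mult_distrib algebra_simps)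
qed

lemma E_deriv:
  assumes \<phi>': "(\<phi> has_real_derivative \<phi>') (at t)"
  shows "(E has_real_derivative
     (((\<phi> t)\<^sup>2 - q t) * (2 * \<phi> t * P t) + \<phi>' * ((\<phi> t)\<^sup>2 * U t - V t)) / (2 * (\<phi> t)\<^sup>2 * J)) (at t)"
proof -
  have p: "\<phi> t > 0" using phi_pos .
  have N: "((\<lambda>x. V x + (\<phi> x)\<^sup>2 * U x) has_real_derivative
       - 2 * q t * P t + ((\<phi> t)\<^sup>2 * (2 * P t) + (2 * \<phi> t * \<phi>') * U t)) (at t)"
    by (intro DERIV_add V_deriv DERIV_mult' U_deriv)
       (use DERIV_power[OF \<phi>', of 2] in \<open>simp add: power2_eq_square ac_simps\<close>)
  have D: "((\<lambda>x. 2 * \<phi> x * J) has_real_derivative 2 * \<phi>' * J) (at t)"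
    using DERIV_cmult[OF DERIV_cmult[OF \<phi>', of 2], of J] by (simp add: mult.commute mult.left_commute)
  have "(E has_real_derivative
     ((- 2 * q t * P t + ((\<phi> t)\<^sup>2 * (2 * P t) + (2 * \<phi> t * \<phi>') * U t)) * (2 * \<phi> t * J)
       - (V t + (\<phi> t)\<^sup>2 * U t) * (2 * \<phi>' * J)) / ((2 * \<phi> t * J) * (2 * \<phi> t * J))) (at t)"
    unfolding E_def[abs_def] by (rule DERIV_divide[OF N D]) (use p flux_pos in simp)
  moreover have "((- 2 * q t * P t + ((\<phi> t)\<^sup>2 * (2 * P t) + (2 * \<phi> t * \<phi>') * U t)) * (2 * \<phi> t * J)
       - (V t + (\<phi> t)\<^sup>2 * U t) * (2 * \<phi>' * J)) / ((2 * \<phi> t * J) * (2 * \<phi> t * J))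
     = (((\<phi> t)\<^sup>2 - q t) * (2 * \<phi> t * P t) + \<phi>' * ((\<phi> t)\<^sup>2 * U t - V t)) / (2 * (\<phi> t)\<^sup>2 * J)"
    using p flux_pos by (simp add: field_simps power2_eq_square)
  ultimately show ?thesis by simp
qed

lemma H_deriv:
  assumes E': "(E has_real_derivative E') (at t)" and e: "\<epsilon> > 0"
  shows "(H \<epsilon> has_real_derivative E' / sqrt ((E t)\<^sup>2 - 1 + \<epsilon>)) (at t)"
proof -
  define R where "R = sqrt ((E t)\<^sup>2 - 1 + \<epsilon>)"
  have pos: "(E t)\<^sup>2 - 1 + \<epsilon> > 0" using E_ge_1[of t] e by (simp add: add_nonneg_pos one_le_power)
  then have R: "R > 0" unfolding R_def by simp
  have ER: "E t + R > 0" using E_ge_1[of t] R by simp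
  have "((\<lambda>x. (E x)\<^sup>2 - 1 + \<epsilon>) has_real_derivative 2 * E t * E') (at t)"
    using DERIV_add[OF DERIV_diff[OF DERIV_power[OF E', of 2] DERIV_const[of 1]] DERIV_const[of \<epsilon>]]
    by (simp add: ac_simps)
  from DERIV_real_sqrt[THEN DERIV_chain2, OF pos this]
  have "((\<lambda>x. sqrt ((E x)\<^sup>2 - 1 + \<epsilon>)) has_real_derivative inverse R / 2 * (2 * E t * E')) (at t)"
    unfolding R_def .
  from DERIV_chain2[OF DERIV_ln[OF ER[unfolded R_def]] DERIV_add[OF E' this]]
  have d: "(H \<epsilon> has_real_derivative inverse (E t + R) * (E' + inverse R / 2 * (2 * E t * E'))) (at t)"
    unfolding H_def[abs_def] R_def .
  have "E' + inverse R / 2 * (2 * E t * E') = E' * (E t + R) / R"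
    using R by (simp add: field_simps)
  moreover have "inverse (E t + R) * (E' * (E t + R) / R) = E' / R" using ER by simp
  ultimately have "inverse (E t + R) * (E' + inverse R / 2 * (2 * E t * E')) = E' / R" by simp
  from d[unfolded this, unfolded R_def] show ?thesis .
qed

text \<open>The key differential inequality: \<open>H\<^sub>\<epsilon>' \<ge> -(2 s + |\<phi>'| / \<phi>)\<close>, using \<open>\<phi>\<^sup>2 - q = 2 s \<phi>\<close>.\<close>
lemma H_deriv_lower_bound:
  assumes \<phi>': "(\<phi> has_real_derivative \<phi>') (at t)" and e: "\<epsilon> > 0"
  obtains H' where "(H \<epsilon> has_real_derivative H') (at t)" "H' \<ge> - (2 * s t + \<bar>\<phi>'\<bar> / \<phi> t)"
proof
  show "(H \<epsilon> has_real_derivative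
    (((\<phi> t)\<^sup>2 - q t) * (2 * \<phi> t * P t) + \<phi>' * ((\<phi> t)\<^sup>2 * U t - V t)) / (2 * (\<phi> t)\<^sup>2 * J)
      / sqrt ((E t)\<^sup>2 - 1 + \<epsilon>)) (at t)"
    by (rule H_deriv[OF E_deriv[OF \<phi>'] e])
  have "(((\<phi> t)\<^sup>2 - q t) * (2 * \<phi> t * P t) + \<phi>' * ((\<phi> t)\<^sup>2 * U t - V t)) / (2 * (\<phi> t)\<^sup>2 * J)
      / sqrt ((E t)\<^sup>2 - 1 + \<epsilon>) \<ge> - ((\<bar>(\<phi> t)\<^sup>2 - q t\<bar> + \<bar>\<phi>'\<bar>) / \<phi> t)"
    by (rule energy_rate_lower_bound[OF phi_pos flux_pos e E_ge_1 energy_decomposition_E])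
  moreover have "\<bar>(\<phi> t)\<^sup>2 - q t\<bar> = 2 * s t * \<phi> t"
    using phi_square[of t] s_nonneg[of t] phi_pos[of t] by simp
  moreover have "(2 * s t * \<phi> t + \<bar>\<phi>'\<bar>) / \<phi> t = 2 * s t + \<bar>\<phi>'\<bar> / \<phi> t"
    using phi_pos[of t] by (simp add: field_simps)
  ultimately show "(((\<phi> t)\<^sup>2 - q t) * (2 * \<phi> t * P t) + \<phi>' * ((\<phi> t)\<^sup>2 * U t - V t)) / (2 * (\<phi> t)\<^sup>2 * J)
      / sqrt ((E t)\<^sup>2 - 1 + \<epsilon>) \<ge> - (2 * s t + \<bar>\<phi>'\<bar> / \<phi> t)" by simp
qed

lemma s_cont_on: "continuous_on A s"
  by (intro continuous_at_imp_continuous_on ballI s_cont)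

lemma H_cont:
  assumes "\<epsilon> > 0"
  shows "isCont (H \<epsilon>) x"
proof -
  have "isCont E x"
    unfolding E_def using phi_pos[of x] flux_pos
    by (intro continuous_intros U_cont V_cont phi_cont) auto
  moreover have "E x + sqrt ((E x)\<^sup>2 - 1 + \<epsilon>) > 0"
    using E_ge_1[of x] assms by (simp add: add_pos_nonneg one_le_power)
  ultimately show ?thesis unfolding H_def[abs_def] by (intro continuous_intros) auto
qed

text \<open>Where \<open>q\<close> is monotone with sign \<open>\<sigma>\<close>, the logarithmic ratio \<open>ln (g / (\<Delta> + s))\<close>
  grows (with sign \<open>\<sigma>\<close>) at least as fast as \<open>|\<phi>'| / \<phi>\<close>; this compensates the
  \<open>\<phi>'\<close>-term in the bound for \<open>H\<^sub>\<epsilon>'\<close>.\<close>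
lemma log_ratio_deriv:
  assumes q': "(q has_real_derivative q') (at t)" and t: "t \<notin> level_edges"
    and \<sigma>: "\<sigma> = 1 \<or> \<sigma> = -1" and sign: "\<sigma> * q' \<ge> 0"
  obtains \<phi>' L' where "(\<phi> has_real_derivative \<phi>') (at t)"
    "((\<lambda>t. ln (g t) - ln (\<Delta> + s t)) has_real_derivative L') (at t)"
    "\<sigma> * L' \<ge> \<bar>\<phi>'\<bar> / \<phi> t"
proof -
  obtain g' s' where g': "(g has_real_derivative g') (at t)" and s': "(s has_real_derivative s') (at t)"
    and cases: "(s t = 0 \<and> s' = 0 \<and> g' * (2 * g t) = q') \<or> (g t = \<Delta> \<and> g' = 0 \<and> s t > 0 \<and> s' * (2 * s t) = - q')"
    using g_s_derivatives[OF q' t] by blast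
  have Ds: "\<Delta> + s t > 0" using Delta_pos s_nonneg[of t] by linarith
  have "(\<phi> has_real_derivative g' + s') (at t)"
    unfolding \<phi>_def[abs_def] by (rule DERIV_add[OF g' s'])
  moreover have "((\<lambda>t. ln (g t) - ln (\<Delta> + s t)) has_real_derivative
      inverse (g t) * g' - inverse (\<Delta> + s t) * s') (at t)"
    using DERIV_diff[OF DERIV_chain2[OF DERIV_ln[OF g_pos] g']
        DERIV_chain2[OF DERIV_ln[OF Ds] DERIV_add[OF DERIV_const[of \<Delta>] s']]] by simp
  moreover have "\<sigma> * (inverse (g t) * g' - inverse (\<Delta> + s t) * s') \<ge> \<bar>g' + s'\<bar> / \<phi> t"
    using cases
  proof
    assume A: "s t = 0 \<and> s' = 0 \<and> g' * (2 * g t) = q'"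
    then have "\<sigma> * g' * (2 * g t) \<ge> 0" using sign by (simp add: mult.assoc)
    then have "\<sigma> * g' \<ge> 0" using g_pos[of t] by (simp add: zero_le_mult_iff)
    then have "\<sigma> * g' = \<bar>g'\<bar>" using \<sigma> by auto
    moreover have "\<phi> t = g t" using A by (simp add: \<phi>_def)
    moreover have "\<sigma> * (inverse (g t) * g' - inverse (\<Delta> + s t) * s') = (\<sigma> * g') / g t"
      using A by (simp add: divide_inverse algebra_simps)
    ultimately show ?thesis using A by simp
  next
    assume B: "g t = \<Delta> \<and> g' = 0 \<and> s t > 0 \<and> s' * (2 * s t) = - q'"
    then have "- \<sigma> * s' * (2 * s t) \<ge> 0" using sign by (simp add: mult.assoc)
    moreover have "- \<sigma> * s' = (- \<sigma> * s' * (2 * s t)) / (2 * s t)" using B by simp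
    ultimately have "- \<sigma> * s' \<ge> 0" using B by (metis divide_nonneg_pos mult_pos_pos zero_less_numeral)
    then have "- \<sigma> * s' = \<bar>s'\<bar>" using \<sigma> by auto
    moreover have "\<phi> t = \<Delta> + s t" using B by (simp add: \<phi>_def)
    moreover have "\<sigma> * (inverse (g t) * g' - inverse (\<Delta> + s t) * s') = (- \<sigma> * s') / (\<Delta> + s t)"
      using B by (simp add: divide_inverse algebra_simps)
    ultimately show ?thesis using B by simp
  qed
  ultimately show ?thesis by (rule that)
qed

lemma H_monotone_piece:
  assumes yz: "y \<le> z" and e: "\<epsilon> > 0" and \<sigma>: "\<sigma> = 1 \<or> \<sigma> = -1"
    and sign: "\<And>t D. y < t \<Longrightarrow> t < z \<Longrightarrow> (q has_real_derivative D) (at t) \<Longrightarrow> \<sigma> * D \<ge> 0"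
  shows "H \<epsilon> y + \<sigma> * (ln (g y) - ln (\<Delta> + s y))
      \<le> H \<epsilon> z + \<sigma> * (ln (g z) - ln (\<Delta> + s z)) + 2 * integral {y..z} s"
proof -
  obtain S q' where S: "finite S" "\<And>x. x \<notin> S \<Longrightarrow> (q has_real_derivative q' x) (at x)"
    using q_derivative_off_finite by blast
  define \<Psi> where "\<Psi> t = H \<epsilon> t + \<sigma> * (ln (g t) - ln (\<Delta> + s t)) + 2 * integral {y..t} s" for t
  have Ds: "\<Delta> + s t > 0" for t using Delta_pos s_nonneg[of t] by linarith
  have "\<Psi> y \<le> \<Psi> z"
  proof (rule nondecreasing_off_finite[OF yz, of "S \<union> level_edges"])
    show "finite (S \<union> level_edges)" using S(1) level_edges_finite by simp
    have c1: "continuous_on {y..z} (\<lambda>t. H \<epsilon> t + \<sigma> * (ln (g t) - ln (\<Delta> + s t)))"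
      using g_pos Ds
      by (intro continuous_at_imp_continuous_on ballI continuous_intros H_cont[OF e] g_cont s_cont)
         (auto simp: less_imp_neq[symmetric])
    have c2: "continuous_on {y..z} (\<lambda>t. integral {y..t} s)"
      by (intro indefinite_integral_continuous_1 integrable_continuous_real s_cont_on)
    show "continuous_on {y..z} \<Psi>" unfolding \<Psi>_def
      by (rule continuous_on_add[OF c1 continuous_on_mult[OF continuous_on_const c2]])
  next
    fix t assume t: "t \<in> {y<..<z}" "t \<notin> S \<union> level_edges"
    have q't: "(q has_real_derivative q' t) (at t)" using S(2) t by auto
    obtain \<phi>' L' where \<phi>': "(\<phi> has_real_derivative \<phi>') (at t)"
      and L': "((\<lambda>t. ln (g t) - ln (\<Delta> + s t)) has_real_derivative L') (at t)"
      and L'_bound: "\<sigma> * L' \<ge> \<bar>\<phi>'\<bar> / \<phi> t"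
      using log_ratio_deriv[OF q't _ \<sigma> sign[OF _ _ q't]] t by auto
    obtain H' where H': "(H \<epsilon> has_real_derivative H') (at t)" "H' \<ge> - (2 * s t + \<bar>\<phi>'\<bar> / \<phi> t)"
      using H_deriv_lower_bound[OF \<phi>' e] by blast
    have "((\<lambda>t. integral {y..t} s) has_real_derivative s t) (at t)"
      using integral_has_real_derivative[OF s_cont_on, of t y z] t at_within_Icc_at[of y t z] by auto
    then have "(\<Psi> has_real_derivative H' + \<sigma> * L' + 2 * s t) (at t)"
      unfolding \<Psi>_def[abs_def] by (intro DERIV_add DERIV_cmult H'(1) L')
    moreover have "H' + \<sigma> * L' + 2 * s t \<ge> 0" using H'(2) L'_bound by linarith
    ultimately show "\<exists>D. (\<Psi> has_real_derivative D) (at t) \<and> D \<ge> 0" by blast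
  qed
  then show ?thesis unfolding \<Psi>_def by simp
qed

lemma H_monotone_left:
  assumes "y \<le> z" "z \<le> x0" "\<epsilon> > 0"
  shows "H \<epsilon> y \<le> H \<epsilon> z + (ln (g y) - ln (g z)) + (ln (\<Delta> + s z) - ln (\<Delta> + s y)) + 2 * integral {y..z} s"
  using H_monotone_piece[OF assms(1) assms(3), of "-1"] q_deriv_nonpos_left assms by fastforce

lemma H_monotone_right:
  assumes "x0 \<le> y" "y \<le> z" "\<epsilon> > 0"
  shows "H \<epsilon> y \<le> H \<epsilon> z + (ln (g z) - ln (g y)) + (ln (\<Delta> + s y) - ln (\<Delta> + s z)) + 2 * integral {y..z} s"
  using H_monotone_piece[OF assms(2) assms(3), of 1] q_deriv_nonneg_right assms by fastforce

lemma phi_limit: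
  fixes F :: "real filter"
  assumes k: "k > 0" and ql: "(q \<longlongrightarrow> k\<^sup>2) F" and kD: "\<Delta>\<^sup>2 \<le> k\<^sup>2"
  shows "(\<phi> \<longlongrightarrow> k) F"
proof -
  have "((\<lambda>x. sqrt (max (q x) (\<Delta>\<^sup>2)) + sqrt (max 0 (\<Delta>\<^sup>2 - q x))) \<longlongrightarrow>
     sqrt (max (k\<^sup>2) (\<Delta>\<^sup>2)) + sqrt (max 0 (\<Delta>\<^sup>2 - k\<^sup>2))) F"
    by (intro tendsto_intros ql)
  moreover have "sqrt (max (k\<^sup>2) (\<Delta>\<^sup>2)) + sqrt (max 0 (\<Delta>\<^sup>2 - k\<^sup>2)) = k"
    using kD k by (simp add: max_def)
  ultimately show ?thesis unfolding \<phi>_def g_def s_def by simp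
qed

lemma E_limit:
  fixes F :: "real filter"
  assumes k: "k > 0" and ql: "(q \<longlongrightarrow> k\<^sup>2) F"
    and kD: "\<Delta>\<^sup>2 \<le> k\<^sup>2" and energy: "((\<lambda>x. V x + k\<^sup>2 * U x) \<longlongrightarrow> L) F"
  shows "(E \<longlongrightarrow> L / (2 * k * J)) F"
proof -
  note \<phi>_lim = phi_limit[OF k ql kD]
  have k2: "k\<^sup>2 > 0" using k by simp
  define M where "M = (L + 1) / k\<^sup>2"
  have "eventually (\<lambda>x. V x + k\<^sup>2 * U x < L + 1) F" using order_tendstoD(2)[OF energy, of "L + 1"] by simp
  then have U_bounded: "eventually (\<lambda>x. U x \<le> M) F"
  proof eventually_elim
    case (elim x)
    then have "U x * k\<^sup>2 \<le> L + 1" using V_nonneg[of x] by (simp add: mult.commute)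
    then show ?case using k2 by (simp add: M_def pos_le_divide_eq)
  qed
  have \<phi>2_lim: "((\<lambda>x. (\<phi> x)\<^sup>2 - k\<^sup>2) \<longlongrightarrow> 0) F"
    using tendsto_diff[OF tendsto_power[OF \<phi>_lim, of 2] tendsto_const[of "k\<^sup>2"]] by simp
  have "((\<lambda>x. ((\<phi> x)\<^sup>2 - k\<^sup>2) * U x) \<longlongrightarrow> 0) F"
  proof (rule Lim_null_comparison)
    show "eventually (\<lambda>x. norm (((\<phi> x)\<^sup>2 - k\<^sup>2) * U x) \<le> \<bar>(\<phi> x)\<^sup>2 - k\<^sup>2\<bar> * M) F"
      using U_bounded
    proof eventually_elim
      case (elim x)
      have "norm (((\<phi> x)\<^sup>2 - k\<^sup>2) * U x) = \<bar>(\<phi> x)\<^sup>2 - k\<^sup>2\<bar> * U x"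
        using U_nonneg[of x] by (simp add: abs_mult)
      then show ?case using elim by (simp add: mult_left_mono)
    qed
    show "((\<lambda>x. \<bar>(\<phi> x)\<^sup>2 - k\<^sup>2\<bar> * M) \<longlongrightarrow> 0) F"
      by (intro tendsto_mult_left_zero tendsto_rabs_zero \<phi>2_lim)
  qed
  from tendsto_add[OF energy this]
  have "((\<lambda>x. V x + (\<phi> x)\<^sup>2 * U x) \<longlongrightarrow> L) F" by (simp add: algebra_simps)
  moreover have "2 * k * J \<noteq> 0" using k flux_pos by simp
  ultimately have "((\<lambda>x. (V x + (\<phi> x)\<^sup>2 * U x) / (2 * \<phi> x * J)) \<longlongrightarrow> L / (2 * k * J)) F"
    by (intro tendsto_intros \<phi>_lim)
  then show ?thesis unfolding E_def[abs_def] .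
qed

lemma E_at_top: "(E \<longlongrightarrow> 1) at_top"
proof -
  have "(E \<longlongrightarrow> 2 * kp\<^sup>2 * (cmod \<tau>)\<^sup>2 / (2 * kp * J)) at_top"
    using E_limit[OF kp_pos lim_top _ transmitted_waves(2)] Delta_hi by simp
  moreover have "2 * kp\<^sup>2 * (cmod \<tau>)\<^sup>2 / (2 * kp * J) = 1"
    using transmitted_waves(1) kp_pos transmission_nonzero by (simp add: power2_eq_square)
  ultimately show ?thesis by simp
qed

lemma E_at_bot: "(E \<longlongrightarrow> (1 + (cmod r)\<^sup>2) / (1 - (cmod r)\<^sup>2)) at_bot"
proof -
  have "(E \<longlongrightarrow> 2 * km\<^sup>2 * (1 + (cmod r)\<^sup>2) / (2 * km * J)) at_bot"
    using E_limit[OF km_pos lim_bot _ reflected_waves(2)] Delta_hi by simp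
  moreover have "2 * km\<^sup>2 * (1 + (cmod r)\<^sup>2) / (2 * km * J) = (1 + (cmod r)\<^sup>2) / (1 - (cmod r)\<^sup>2)"
    using reflected_waves(1) km_pos by (simp add: power2_eq_square)
  ultimately show ?thesis by simp
qed

lemma H_at_top:
  assumes "\<epsilon> > 0"
  shows "(H \<epsilon> \<longlongrightarrow> ln (1 + sqrt \<epsilon>)) at_top"
proof -
  have "((\<lambda>x. ln (E x + sqrt ((E x)\<^sup>2 - 1 + \<epsilon>))) \<longlongrightarrow> ln (1 + sqrt (1\<^sup>2 - 1 + \<epsilon>))) at_top"
    using assms by (intro tendsto_intros E_at_top) (simp add: add_pos_pos[THEN less_imp_neq, symmetric])
  then show ?thesis unfolding H_def[abs_def] by simp
qed

lemma s_le_peak: "s x \<le> s x0"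
  unfolding s_def using q_min[of x] by (intro real_sqrt_le_mono) auto

lemma peak_eq_Sup: "(SUP x. sqrt (max 0 (\<Delta>\<^sup>2 - q x))) = s x0"
  using s_le_peak by (intro cSup_eq_maximum) (auto simp: s_def)

lemma s_integral:
  assumes "(\<lambda>x. sqrt (\<Delta>\<^sup>2 - q x)) integrable_on {x. q x < \<Delta>\<^sup>2}"
  shows "s integrable_on UNIV"
    and "integral UNIV s = integral {x. q x < \<Delta>\<^sup>2} (\<lambda>x. sqrt (\<Delta>\<^sup>2 - q x))"
proof -
  have "s = (\<lambda>x. if x \<in> {x. q x < \<Delta>\<^sup>2} then sqrt (\<Delta>\<^sup>2 - q x) else 0)"
    by (auto simp: s_def max_def fun_eq_iff)
  then show "s integrable_on UNIV" "integral UNIV s = integral {x. q x < \<Delta>\<^sup>2} (\<lambda>x. sqrt (\<Delta>\<^sup>2 - q x))"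
    using assms by (simp_all only: integrable_restrict_UNIV integral_restrict_UNIV)
qed

definition "K = ln km + ln kp - 2 * ln \<Delta> + 2 * (ln (\<Delta> + s x0) - ln \<Delta>) + 2 * integral UNIV s"

text \<open>Crossing the well from \<open>y \<le> x\<^sub>0\<close> to \<open>z \<ge> x\<^sub>0\<close> increases \<open>H\<^sub>\<epsilon>\<close> by at most \<open>K\<close>
  in reverse: the logarithmic terms are bounded using \<open>\<Delta> \<le> g \<le> k\<^sub>\<plusminus>\<close>.\<close>
lemma H_across_well:
  assumes s_int: "s integrable_on UNIV" and y: "y \<le> x0" and z: "x0 \<le> z" and e: "\<epsilon> > 0"
  shows "H \<epsilon> y \<le> H \<epsilon> z + K"
proof -
  have left: "H \<epsilon> y \<le> H \<epsilon> x0 + (ln (g y) - ln (g x0)) + (ln (\<Delta> + s x0) - ln (\<Delta> + s y))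
      + 2 * integral {y..x0} s"
    by (rule H_monotone_left[OF y order_refl e])
  have right: "H \<epsilon> x0 \<le> H \<epsilon> z + (ln (g z) - ln (g x0)) + (ln (\<Delta> + s x0) - ln (\<Delta> + s z))
      + 2 * integral {x0..z} s"
    by (rule H_monotone_right[OF order_refl z e])
  have "integral {y..x0} s + integral {x0..z} s = integral {y..z} s"
    by (intro Henstock_Kurzweil_Integration.integral_combine y z integrable_continuous_real s_cont_on)
  also have "\<dots> \<le> integral UNIV s"
    by (rule integral_subset_le) (use s_int s_nonneg in \<open>auto intro: integrable_continuous_real s_cont_on\<close>)
  finally have int: "integral {y..x0} s + integral {x0..z} s \<le> integral UNIV s" .
  have "g y \<le> km"
    unfolding g_def using q_le_km[OF y] Delta_hi km_pos
    by (metis max.bounded_iff min.bounded_iff real_sqrt_abs real_sqrt_le_mono abs_of_pos)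
  moreover have "g z \<le> kp"
    unfolding g_def using q_le_kp[OF z] Delta_hi kp_pos
    by (metis max.bounded_iff min.bounded_iff real_sqrt_abs real_sqrt_le_mono abs_of_pos)
  ultimately have "ln (g y) \<le> ln km" "ln (g z) \<le> ln kp" using g_pos[of y] g_pos[of z] by simp_all
  moreover have "ln \<Delta> \<le> ln (g x0)" using g_ge[of x0] Delta_pos by simp
  moreover have "ln \<Delta> \<le> ln (\<Delta> + s y)" "ln \<Delta> \<le> ln (\<Delta> + s z)"
    using s_nonneg[of y] s_nonneg[of z] Delta_pos by simp_all
  ultimately show ?thesis using left right int unfolding K_def by (smt (verit))
qed

text \<open>Letting \<open>z \<rightarrow> \<infinity>\<close> (where \<open>H\<^sub>\<epsilon> \<rightarrow> ln (1 + \<surd>\<epsilon>)\<close>) and then \<open>\<epsilon> \<rightarrow> 0\<close>: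
  \<open>arcosh E \<le> K\<close> to the left of the well.\<close>
lemma arcosh_E_bound:
  assumes s_int: "s integrable_on UNIV" and y: "y \<le> x0"
  shows "ln (E y + sqrt ((E y)\<^sup>2 - 1)) \<le> K"
proof (rule field_le_epsilon)
  fix \<delta> :: real assume \<delta>: "\<delta> > 0"
  define \<epsilon> where "\<epsilon> = \<delta>\<^sup>2"
  have e: "\<epsilon> > 0" using \<delta> by (simp add: \<epsilon>_def)
  have "eventually (\<lambda>z. H \<epsilon> y - K \<le> H \<epsilon> z) at_top"
    unfolding eventually_at_top_linorder
  proof (intro exI[of _ x0] allI impI)
    fix z assume "x0 \<le> z"
    from H_across_well[OF s_int y this e] show "H \<epsilon> y - K \<le> H \<epsilon> z" by linarith
  qed
  from tendsto_lowerbound[OF H_at_top[OF e] this]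
  have "H \<epsilon> y - K \<le> ln (1 + sqrt \<epsilon>)" by simp
  moreover have "ln (1 + sqrt \<epsilon>) \<le> sqrt \<epsilon>" using e by (intro ln_add_one_self_le_self) simp
  moreover have "sqrt \<epsilon> = \<delta>" using \<delta> by (simp add: \<epsilon>_def)
  moreover have "ln (E y + sqrt ((E y)\<^sup>2 - 1)) \<le> H \<epsilon> y"
    unfolding H_def using E_ge_1[of y] e by (simp add: add_pos_nonneg one_le_power)
  ultimately show "ln (E y + sqrt ((E y)\<^sup>2 - 1)) \<le> K + \<delta>" by linarith
qed

lemma reflection_bound:
  assumes s_int: "s integrable_on UNIV"
  shows "ln ((1 + cmod r) / (1 - cmod r)) \<le> K"
proof -
  have r: "0 \<le> cmod r" "cmod r < 1" using reflection_lt_1 by simp_all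
  have "((\<lambda>y. E y + sqrt ((E y)\<^sup>2 - 1)) \<longlongrightarrow> (1 + cmod r) / (1 - cmod r)) at_bot"
    using tendsto_add[OF E_at_bot tendsto_real_sqrt[OF tendsto_diff[OF tendsto_power[OF E_at_bot, of 2]
          tendsto_const[of 1]]]]
    unfolding arcosh_reflection_identity[OF r] .
  from tendsto_ln[OF this reflection_ratio_pos[THEN less_imp_neq, symmetric]]
  have "((\<lambda>y. ln (E y + sqrt ((E y)\<^sup>2 - 1))) \<longlongrightarrow> ln ((1 + cmod r) / (1 - cmod r))) at_bot" .
  then show ?thesis
    by (rule tendsto_upperbound)
       (auto simp: eventually_at_bot_linorder intro!: exI[of _ x0] arcosh_E_bound[OF s_int])
qed

lemma transmission_lower_bound:
  assumes int: "(\<lambda>x. sqrt (\<Delta>\<^sup>2 - q x)) integrable_on {x. q x < \<Delta>\<^sup>2}"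
  shows "(kp / km) * (cmod \<tau>)\<^sup>2 \<ge>
      (sech (ln (kp * km / \<Delta>\<^sup>2) / 2
             + (SUP x. sqrt (max 0 (\<Delta>\<^sup>2 - q x))) / \<Delta>
             + integral {x. q x < \<Delta>\<^sup>2} (\<lambda>x. sqrt (\<Delta>\<^sup>2 - q x))))\<^sup>2"
    (is "_ \<ge> (sech ?\<Theta>)\<^sup>2")
proof -
  have r: "0 \<le> cmod r" "cmod r < 1" using reflection_lt_1 by simp_all
  define peak where "peak = s x0 / \<Delta>"
  have "ln (\<Delta> + s x0) - ln \<Delta> = ln ((\<Delta> + s x0) / \<Delta>)"
    using Delta_pos s_nonneg[of x0] by (intro ln_divide_pos[symmetric]) auto
  also have "\<dots> = ln (1 + peak)" using Delta_pos by (simp add: peak_def field_simps)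
  also have "\<dots> \<le> peak" using Delta_pos s_nonneg[of x0] by (intro ln_add_one_self_le_self) (simp add: peak_def)
  finally have peak_bound: "ln (\<Delta> + s x0) - ln \<Delta> \<le> peak" .
  have "ln (kp * km / \<Delta>\<^sup>2) = ln kp + ln km - 2 * ln \<Delta>"
    using kp_pos km_pos Delta_pos by (simp add: ln_div ln_mult ln_realpow)
  then have "K = ln (kp * km / \<Delta>\<^sup>2) + 2 * (ln (\<Delta> + s x0) - ln \<Delta>) + 2 * integral UNIV s"
    unfolding K_def by simp
  also have "\<dots> \<le> ln (kp * km / \<Delta>\<^sup>2) + 2 * peak + 2 * integral UNIV s"
    using peak_bound by simp
  also have "\<dots> = 2 * ?\<Theta>"
    unfolding peak_def peak_eq_Sup s_integral(2)[OF int] by (simp add: algebra_simps)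
  finally have "K \<le> 2 * ?\<Theta>" .
  with reflection_bound[OF s_integral(1)[OF int]]
  have "ln ((1 + cmod r) / (1 - cmod r)) \<le> 2 * ?\<Theta>" by linarith
  then have "(1 + cmod r) / (1 - cmod r) \<le> exp (2 * ?\<Theta>)"
    using reflection_ratio_pos by (metis exp_le_cancel_iff exp_ln)
  from transmission_from_reflection_bound[OF r _ this]
  have "(sech ?\<Theta>)\<^sup>2 \<le> 1 - (cmod r)\<^sup>2" unfolding sech_square_exp by simp
  moreover have "(kp / km) * (cmod \<tau>)\<^sup>2 = 1 - (cmod r)\<^sup>2"
    using transmitted_waves(1) reflected_waves(1) km_pos by (simp add: field_simps)
  ultimately show ?thesis by simp
qed

end

theorem mainTheorem14:
  fixes q :: "real \<Rightarrow> real" and kp km x0 \<Delta> :: real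
    and u u' :: "real \<Rightarrow> complex" and r \<tau> :: complex
  assumes kp_pos: "kp > 0" and km_pos: "km > 0"
    and lim_top: "(q \<longlongrightarrow> kp\<^sup>2) at_top"
    and lim_bot: "(q \<longlongrightarrow> km\<^sup>2) at_bot"
    and int_top: "\<exists>a. (\<lambda>x. q x - kp\<^sup>2) absolutely_integrable_on {a..}"
    and int_bot: "\<exists>a. (\<lambda>x. q x - km\<^sup>2) absolutely_integrable_on {..a}"
    and pC1: "q piecewise_C1_differentiable_on UNIV"
    and noninc: "\<And>x y. x \<le> y \<Longrightarrow> y \<le> x0 \<Longrightarrow> q y \<le> q x"
    and nondec: "\<And>x y. x0 \<le> x \<Longrightarrow> x \<le> y \<Longrightarrow> q x \<le> q y"
    and Delta_pos: "\<Delta> > 0"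
    and Delta_lo: "q x0 \<le> \<Delta>\<^sup>2"
    and Delta_hi: "\<Delta>\<^sup>2 \<le> min (kp\<^sup>2) (km\<^sup>2)"
    and u_deriv: "\<And>x. (u has_vector_derivative u' x) (at x)"
    and u'_deriv: "\<And>x. (u' has_vector_derivative (- (complex_of_real (q x) * u x))) (at x)"
    and asym_bot: "((\<lambda>x. u x - (exp (\<i> * complex_of_real (km * x))
                        + r * exp (- \<i> * complex_of_real (km * x)))) \<longlongrightarrow> 0) at_bot"
    and asym_top: "((\<lambda>x. u x - \<tau> * exp (\<i> * complex_of_real (kp * x))) \<longlongrightarrow> 0) at_top"
  shows "(\<lambda>x. sqrt (\<Delta>\<^sup>2 - q x)) integrable_on {x. q x < \<Delta>\<^sup>2} \<longrightarrow>
    (kp / km) * (cmod \<tau>)\<^sup>2 \<ge>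
      (sech (ln (kp * km / \<Delta>\<^sup>2) / 2
             + (SUP x. sqrt (max 0 (\<Delta>\<^sup>2 - q x))) / \<Delta>
             + integral {x. q x < \<Delta>\<^sup>2} (\<lambda>x. sqrt (\<Delta>\<^sup>2 - q x))))\<^sup>2"
proof
  assume integrable: "(\<lambda>x. sqrt (\<Delta>\<^sup>2 - q x)) integrable_on {x. q x < \<Delta>\<^sup>2}"
  interpret scattering q u u' kp km x0 \<Delta> r \<tau>
    by unfold_locales (fact kp_pos km_pos lim_top lim_bot pC1 noninc nondec Delta_pos Delta_hi
        u_deriv u'_deriv asym_bot asym_top)+
  from integrable show "(kp / km) * (cmod \<tau>)\<^sup>2 \<ge>
      (sech (ln (kp * km / \<Delta>\<^sup>2) / 2
             + (SUP x. sqrt (max 0 (\<Delta>\<^sup>2 - q x))) / \<Delta>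
             + integral {x. q x < \<Delta>\<^sup>2} (\<lambda>x. sqrt (\<Delta>\<^sup>2 - q x))))\<^sup>2"
    by (rule transmission_lower_bound)
qed

end
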